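(* Let $A=\bigoplus_{i\in\mathbb{Z}}A_i$ be a pre-CP ring, and let $\psi:A_{-1}\otimes_{A_0}A_1\to A_0$ be given by $\psi(a\otimes b)=ab$. Then $(A_{-1},A_1,\psi)$ is an s-unital $A_0$-system satisfying Condition (FS), its Cuntz–Pimsner ring $\mathcal{O}_{(A_{-1},A_1,\psi)}$ is well-defined, the tuple $(i_{A_{-1}},i_{A_1},i_{A_0},A)$ of inclusion maps is a surjective covariant representation, and $$(i_{A_{-1}},i_{A_1},i_{A_0},A)\cong_r(\iota^{CP}_{A_{-1}},\iota^{CP}_{A_1},\iota^{CP}_{A_0},\mathcal{O}_{(A_{-1},A_1,\psi)}).$$ In particular $A\cong_{\mathrm{gr}}\mathcal{O}_{(A_{-1},A_1,\psi)}$, and this covariant representation is semi-full.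
   Context: Rings are associative, not necessarily unital. For additive subsets $X,Y$ of a ring, $XY$ is the additive subgroup generated by products, and $X^n$ similarly. A bimodule ${}_AM_B$ is s-unital if for each $x\in M$ there are $a\in A,b\in B$ with $ax=x=xb$; a ring is s-unital if it is s-unital as a bimodule over itself. A $\mathbb{Z}$-graded ring $A$ is nearly epsilon-strongly graded if each $A_i$ is an s-unital $A_iA_{-i}$-$A_{-i}A_i$-bimodule; semi-saturated if $A_n=(A_1)^n$, $A_{-n}=(A_{-1})^n$ for $n>0$. $\mathrm{Ann}_{A_0}(A_1)=\{r\in A_0:rA_1=0\}$ and for an ideal $J$ of $A_0$, $J^\perp=\{r\in A_0:rx=xr=0\ \forall x\in J\}$. $A$ is pre-CP if it is semi-saturated, nearly epsilon-strongly graded and $\mathrm{Ann}_{A_0}(A_1)\cap\mathrm{Ann}_{A_0}(A_1)^\perp=\{0\}$. An $R$-system is a triple $(P,Q,\psi)$ with $P,Q$ $R$-bimodules and $\psi:P\otimes_RQ\to R$ an $R$-bimodule homomorphism; it is s-unital if $R$ is s-unital and $P,Q$ are s-unital $R$-$R$-bimodules. Put $P^{\otimes0}=Q^{\otimes0}=R$, $\psi_0(r\otimes r')=rr'$, $\psi_1=\psi$, $Q^{\otimes n}=Q^{\otimes(n-1)}\otimes_RQ$, $P^{\otimes n}=P\otimes_RP^{\otimes(n-1)}$, $\psi_n((p_1\otimes p_2)\otimes(q_2\otimes q_1))=\psi(p_1\psi_{n-1}(p_2\otimes q_2)\otimes q_1)$. A covariant representation is a tuple $(S,T,\sigma,B)$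 with $B$ a ring, $S:P\to B$, $T:Q\to B$ additive, $\sigma:R\to B$ a ring homomorphism, with $S(pr)=S(p)\sigma(r)$, $S(rp)=\sigma(r)S(p)$, $T(qr)=T(q)\sigma(r)$, $T(rq)=\sigma(r)T(q)$, $\sigma(\psi(p\otimes q))=S(p)T(q)$. It is surjective if $B$ is generated as a ring by $\sigma(R)\cup S(P)\cup T(Q)$, graded if moreover $B$ is $\mathbb{Z}$-graded with $\sigma(R)\subseteq B_0$, $T(Q)\subseteq B_1$, $S(P)\subseteq B_{-1}$. For graded ones, $I^{(k)}_{\psi,\sigma}$ is the ideal of $B_0$ generated by $\{\sigma(\psi_k(p\otimes q)):p\in P^{\otimes k},q\in Q^{\otimes k}\}$, and the representation is semi-full if $B_{-k}B_k=I^{(k)}_{\psi,\sigma}$ for all $k\ge0$. A morphism $(S,T,\sigma,B)\to(S',T',\sigma',B')$ is a ring homomorphism $\phi:B\to B'$ with $\phi S=S'$, $\phi T=T'$, $\phi\sigma=\sigma'$; $\cong_r$ is isomorphism in this category. $\theta_{q,p}(x)=q\psi(p\otimes x)$ on $Q$, $\theta_{p,q}(y)=\psi(y\otimes q)p$ on $P$; $\mathcal{F}_P(Q)$, $\mathcal{F}_Q(P)$ are the additive groups they generate. Condition (FS): for all finite sets $\{q_i\}\subseteq Q$, $\{p_j\}\subseteq P$ there are $\Theta\in\mathcal{F}_P(Q)$, $\Phi\in\mathcal{F}_Q(P)$ fixing each $q_i$, resp. $p_j$. $\Delta(r)(q)=rq$. Under (FS), each covariant representation gives a unique ring homomorphism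 $\pi_{T,S}:\mathcal{F}_P(Q)\to B$ with $\theta_{q,p}\mapsto T(q)S(p)$. The Toeplitz representation $(\iota_P,\iota_Q,\iota_R,\mathcal{T}_{(P,Q,\psi)})$ is the universal covariant representation, graded with $\mathcal{T}_i$ generated additively by $\iota_Q^m(q)\iota_P^n(p)$ and $\iota_R(r)\iota_Q^m(q)\iota_P^n(p)$, $q\in Q^{\otimes m},p\in P^{\otimes n}$, $m-n=i$. An ideal $J\subseteq R$ is $\psi$-compatible if $\Delta(J)\subseteq\mathcal{F}_P(Q)$ and faithful if $J\cap\ker\Delta=0$; $\mathcal{T}(J)$ is the ideal generated by $\iota_R(x)-\pi_{\iota_Q,\iota_P}(\Delta(x))$, $x\in J$, and $\mathcal{O}(J)=\mathcal{T}/\mathcal{T}(J)$ with quotient map $\rho$, quotient grading, and representation $(\rho\iota_P,\rho\iota_Q,\rho\iota_R,\mathcal{O}(J))$. If a unique maximal $\psi$-compatible faithful ideal $J$ exists, the Cuntz–Pimsner ring $\mathcal{O}_{(P,Q,\psi)}=\mathcal{O}(J)$ is well-defined, with Cuntz–Pimsner representation $(\iota^{CP}_P,\iota^{CP}_Q,\iota^{CP}_R,\mathcal{O}_{(P,Q,\psi)})$ the corresponding relative representation. *)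

theory Defs
  imports Main
begin

(* Rings are (not necessarily unital) rings given as whole types of class ring;
   sub-structures (graded components, R, P, Q) are subsets of such a type. *)

inductive_set add_span :: "'a::ring set \<Rightarrow> 'a set" for X where
  base: "x \<in> X \<Longrightarrow> x \<in> add_span X"
| zero: "0 \<in> add_span X"
| add: "x \<in> add_span X \<Longrightarrow> y \<in> add_span X \<Longrightarrow> x + y \<in> add_span X"
| neg: "x \<in> add_span X \<Longrightarrow> - x \<in> add_span X"

definition setprod :: "'a::ring set \<Rightarrow> 'a set \<Rightarrow> 'a set" where
  "setprod X Y = add_span {x * y | x y. x \<in> X \<and> y \<in> Y}"

fun setpow :: "'a::ring set \<Rightarrow> nat \<Rightarrow> 'a set" where
  "setpow X 0 = add_span {}"
| "setpow X (Suc 0) = X"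
| "setpow X (Suc (Suc n)) = setprod X (setpow X (Suc n))"

definition add_subgroup :: "'a::ring set \<Rightarrow> bool" where
  "add_subgroup S \<longleftrightarrow> 0 \<in> S \<and> (\<forall>x\<in>S. \<forall>y\<in>S. x + y \<in> S) \<and> (\<forall>x\<in>S. - x \<in> S)"

definition Z_graded :: "(int \<Rightarrow> 'a::ring set) \<Rightarrow> bool" where
  "Z_graded G \<longleftrightarrow> (\<forall>i. add_subgroup (G i))
     \<and> (\<forall>i j. \<forall>x\<in>G i. \<forall>y\<in>G j. x * y \<in> G (i + j))
     \<and> (\<forall>x. \<exists>!f. finite {i. f i \<noteq> 0} \<and> (\<forall>i. f i \<in> G i) \<and> x = (\<Sum>i\<in>{i. f i \<noteq> 0}. f i))"

definition s_unital_bimod :: "'a::ring set \<Rightarrow> 'a set \<Rightarrow> 'a set \<Rightarrow> bool" where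
  "s_unital_bimod L M Rr \<longleftrightarrow> (\<forall>x\<in>M. (\<exists>a\<in>L. a * x = x) \<and> (\<exists>b\<in>Rr. x * b = x))"

definition nearly_eps_strongly_graded :: "(int \<Rightarrow> 'a::ring set) \<Rightarrow> bool" where
  "nearly_eps_strongly_graded G \<longleftrightarrow>
     (\<forall>i. s_unital_bimod (setprod (G i) (G (-i))) (G i) (setprod (G (-i)) (G i)))"

definition semi_saturated :: "(int \<Rightarrow> 'a::ring set) \<Rightarrow> bool" where
  "semi_saturated G \<longleftrightarrow> (\<forall>n::nat. n > 0 \<longrightarrow>
      G (int n) = setpow (G 1) n \<and> G (- int n) = setpow (G (-1)) n)"

definition ann0 :: "(int \<Rightarrow> 'a::ring set) \<Rightarrow> 'a set" where
  "ann0 G = {r \<in> G 0. \<forall>x\<in>G 1. r * x = 0}"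

definition perp :: "'a::ring set \<Rightarrow> 'a set \<Rightarrow> 'a set" where
  "perp R J = {r \<in> R. \<forall>x\<in>J. r * x = 0 \<and> x * r = 0}"

definition pre_CP :: "(int \<Rightarrow> 'a::ring set) \<Rightarrow> bool" where
  "pre_CP G \<longleftrightarrow> Z_graded G \<and> semi_saturated G \<and> nearly_eps_strongly_graded G
     \<and> ann0 G \<inter> perp (G 0) (ann0 G) = {0}"

definition subring :: "'a::ring set \<Rightarrow> bool" where
  "subring R \<longleftrightarrow> add_subgroup R \<and> (\<forall>x\<in>R. \<forall>y\<in>R. x * y \<in> R)"

definition is_ideal :: "'a::ring set \<Rightarrow> 'a set \<Rightarrow> bool" where
  "is_ideal S J \<longleftrightarrow> J \<subseteq> S \<and> add_subgroup J \<and> (\<forall>s\<in>S. \<forall>x\<in>J. s * x \<in> J \<and> x * s \<in> J)"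

definition bimodule :: "'a::ring set \<Rightarrow> 'a set \<Rightarrow> bool" where
  "bimodule R M \<longleftrightarrow> add_subgroup M \<and> (\<forall>r\<in>R. \<forall>m\<in>M. r * m \<in> M \<and> m * r \<in> M)"

(* psi : P \<otimes>_R Q \<rightarrow> R an R-bimodule map, given by its values on elementary tensors,
   i.e. as an R-balanced biadditive map compatible with the outer actions *)
definition R_system :: "'a::ring set \<Rightarrow> 'a set \<Rightarrow> 'a set \<Rightarrow> ('a \<Rightarrow> 'a \<Rightarrow> 'a) \<Rightarrow> bool" where
  "R_system R P Q \<psi> \<longleftrightarrow> subring R \<and> bimodule R P \<and> bimodule R Q
     \<and> (\<forall>p\<in>P. \<forall>q\<in>Q. \<psi> p q \<in> R)
     \<and> (\<forall>p\<in>P. \<forall>p'\<in>P. \<forall>q\<in>Q. \<psi> (p + p') q = \<psi> p q + \<psi> p' q)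
     \<and> (\<forall>p\<in>P. \<forall>q\<in>Q. \<forall>q'\<in>Q. \<psi> p (q + q') = \<psi> p q + \<psi> p q')
     \<and> (\<forall>p\<in>P. \<forall>q\<in>Q. \<forall>r\<in>R. \<psi> (p * r) q = \<psi> p (r * q)
            \<and> \<psi> (r * p) q = r * \<psi> p q \<and> \<psi> p (q * r) = \<psi> p q * r)"

definition s_unital_system :: "'a::ring set \<Rightarrow> 'a set \<Rightarrow> 'a set \<Rightarrow> ('a \<Rightarrow> 'a \<Rightarrow> 'a) \<Rightarrow> bool" where
  "s_unital_system R P Q \<psi> \<longleftrightarrow> R_system R P Q \<psi> \<and> s_unital_bimod R R R
     \<and> s_unital_bimod R P R \<and> s_unital_bimod R Q R"

(* psi_n on elementary tensors: ps = [p1,...,pn] represents p1\<otimes>...\<otimes>pn \<in> P^{\<otimes>n},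
   qs = [q1,...,qn] represents qn\<otimes>...\<otimes>q1 \<in> Q^{\<otimes>n};
   psi_n((p1\<otimes>p')\<otimes>(q'\<otimes>q1)) = psi(p1 psi_{n-1}(p'\<otimes>q') \<otimes> q1) *)
fun psi_list :: "('a::ring \<Rightarrow> 'a \<Rightarrow> 'a) \<Rightarrow> 'a list \<Rightarrow> 'a list \<Rightarrow> 'a" where
  "psi_list \<psi> [p] [q] = \<psi> p q"
| "psi_list \<psi> (p # p' # ps) (q # q' # qs) = \<psi> (p * psi_list \<psi> (p' # ps) (q' # qs)) q"
| "psi_list \<psi> _ _ = 0"

(* values of psi_k on elementary tensors (these additively generate the image of psi_k) *)
definition psi_vals :: "'a::ring set \<Rightarrow> 'a set \<Rightarrow> 'a set \<Rightarrow> ('a \<Rightarrow> 'a \<Rightarrow> 'a) \<Rightarrow> nat \<Rightarrow> 'a set" where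
  "psi_vals R P Q \<psi> k = (if k = 0 then {r * r' | r r'. r \<in> R \<and> r' \<in> R}
     else {psi_list \<psi> ps qs | ps qs. length ps = k \<and> length qs = k \<and> set ps \<subseteq> P \<and> set qs \<subseteq> Q})"

definition ring_hom :: "('a::ring \<Rightarrow> 'b::ring) \<Rightarrow> bool" where
  "ring_hom \<phi> \<longleftrightarrow> (\<forall>x y. \<phi> (x + y) = \<phi> x + \<phi> y \<and> \<phi> (x * y) = \<phi> x * \<phi> y)"

(* covariant representation (S,T,sigma,B), B being the whole type 'b *)
definition cov_rep :: "'a::ring set \<Rightarrow> 'a set \<Rightarrow> 'a set \<Rightarrow> ('a \<Rightarrow> 'a \<Rightarrow> 'a)
    \<Rightarrow> ('a \<Rightarrow> 'b::ring) \<Rightarrow> ('a \<Rightarrow> 'b) \<Rightarrow> ('a \<Rightarrow> 'b) \<Rightarrow> bool" where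
  "cov_rep R P Q \<psi> S T \<sigma> \<longleftrightarrow>
     (\<forall>r\<in>R. \<forall>r'\<in>R. \<sigma> (r + r') = \<sigma> r + \<sigma> r' \<and> \<sigma> (r * r') = \<sigma> r * \<sigma> r')
   \<and> (\<forall>p\<in>P. \<forall>p'\<in>P. S (p + p') = S p + S p')
   \<and> (\<forall>q\<in>Q. \<forall>q'\<in>Q. T (q + q') = T q + T q')
   \<and> (\<forall>p\<in>P. \<forall>r\<in>R. S (p * r) = S p * \<sigma> r \<and> S (r * p) = \<sigma> r * S p)
   \<and> (\<forall>q\<in>Q. \<forall>r\<in>R. T (q * r) = T q * \<sigma> r \<and> T (r * q) = \<sigma> r * T q)
   \<and> (\<forall>p\<in>P. \<forall>q\<in>Q. \<sigma> (\<psi> p q) = S p * T q)"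

inductive_set gen_subring :: "'a::ring set \<Rightarrow> 'a set" for X where
  base: "x \<in> X \<Longrightarrow> x \<in> gen_subring X"
| zero: "0 \<in> gen_subring X"
| add: "x \<in> gen_subring X \<Longrightarrow> y \<in> gen_subring X \<Longrightarrow> x + y \<in> gen_subring X"
| neg: "x \<in> gen_subring X \<Longrightarrow> - x \<in> gen_subring X"
| mult: "x \<in> gen_subring X \<Longrightarrow> y \<in> gen_subring X \<Longrightarrow> x * y \<in> gen_subring X"

inductive_set gen_ideal :: "'a::ring set \<Rightarrow> 'a set \<Rightarrow> 'a set" for S X where
  base: "x \<in> X \<Longrightarrow> x \<in> gen_ideal S X"
| zero: "0 \<in> gen_ideal S X"
| add: "x \<in> gen_ideal S X \<Longrightarrow> y \<in> gen_ideal S X \<Longrightarrow> x + y \<in> gen_ideal S X"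
| neg: "x \<in> gen_ideal S X \<Longrightarrow> - x \<in> gen_ideal S X"
| lmult: "s \<in> S \<Longrightarrow> x \<in> gen_ideal S X \<Longrightarrow> s * x \<in> gen_ideal S X"
| rmult: "s \<in> S \<Longrightarrow> x \<in> gen_ideal S X \<Longrightarrow> x * s \<in> gen_ideal S X"

definition surj_cov_rep where
  "surj_cov_rep R P Q \<psi> S T \<sigma> \<longleftrightarrow> cov_rep R P Q \<psi> S T \<sigma>
     \<and> gen_subring (\<sigma> ` R \<union> S ` P \<union> T ` Q) = UNIV"

definition graded_cov_rep where
  "graded_cov_rep R P Q \<psi> S T \<sigma> H \<longleftrightarrow> surj_cov_rep R P Q \<psi> S T \<sigma> \<and> Z_graded H
     \<and> \<sigma> ` R \<subseteq> H 0 \<and> T ` Q \<subseteq> H 1 \<and> S ` P \<subseteq> H (-1)"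

definition I_ideal where
  "I_ideal R P Q \<psi> \<sigma> H k = gen_ideal (H 0) (\<sigma> ` psi_vals R P Q \<psi> k)"

definition semi_full where
  "semi_full R P Q \<psi> S T \<sigma> H \<longleftrightarrow> graded_cov_rep R P Q \<psi> S T \<sigma> H
     \<and> (\<forall>k::nat. setprod (H (- int k)) (H (int k)) = I_ideal R P Q \<psi> \<sigma> H k)"

definition rep_morph :: "'a::ring set \<Rightarrow> 'a set \<Rightarrow> 'a set
    \<Rightarrow> ('a \<Rightarrow> 'b::ring) \<Rightarrow> ('a \<Rightarrow> 'b) \<Rightarrow> ('a \<Rightarrow> 'b)
    \<Rightarrow> ('a \<Rightarrow> 'c::ring) \<Rightarrow> ('a \<Rightarrow> 'c) \<Rightarrow> ('a \<Rightarrow> 'c) \<Rightarrow> ('b \<Rightarrow> 'c) \<Rightarrow> bool" where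
  "rep_morph R P Q S T \<sigma> S' T' \<sigma>' \<phi> \<longleftrightarrow> ring_hom \<phi>
     \<and> (\<forall>p\<in>P. \<phi> (S p) = S' p) \<and> (\<forall>q\<in>Q. \<phi> (T q) = T' q) \<and> (\<forall>r\<in>R. \<phi> (\<sigma> r) = \<sigma>' r)"

definition rep_iso where
  "rep_iso R P Q S T \<sigma> S' T' \<sigma>' \<longleftrightarrow> (\<exists>\<phi>. rep_morph R P Q S T \<sigma> S' T' \<sigma>' \<phi> \<and> bij \<phi>)"

definition graded_iso :: "(int \<Rightarrow> 'b::ring set) \<Rightarrow> (int \<Rightarrow> 'c::ring set) \<Rightarrow> bool" where
  "graded_iso H K \<longleftrightarrow> (\<exists>\<phi>. ring_hom \<phi> \<and> bij \<phi> \<and> (\<forall>i. \<phi> ` H i = K i))"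

fun nprod :: "'a::ring list \<Rightarrow> 'a" where
  "nprod [] = 0"
| "nprod [x] = x"
| "nprod (x # y # xs) = x * nprod (y # xs)"

(* iota_Q^m(Q^{\<otimes>m}) on elementary tensors, with Q^{\<otimes>0} = R *)
definition tmon :: "('a \<Rightarrow> 'b::ring) \<Rightarrow> ('a \<Rightarrow> 'b) \<Rightarrow> 'a set \<Rightarrow> 'a set \<Rightarrow> nat \<Rightarrow> 'b set" where
  "tmon iR iX R X m = (if m = 0 then iR ` R
     else {nprod (map iX xs) | xs. length xs = m \<and> set xs \<subseteq> X})"

definition toeplitz_grading where
  "toeplitz_grading R P Q iP iQ iR i = add_span
     ({x * y | x y m n. x \<in> tmon iR iQ R Q m \<and> y \<in> tmon iR iP R P n \<and> int m - int n = i}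
    \<union> {iR r * x * y | r x y m n. r \<in> R \<and> x \<in> tmon iR iQ R Q m \<and> y \<in> tmon iR iP R P n
          \<and> int m - int n = i})"

(* universality of (iP,iQ,iR) with respect to covariant representations in rings of type 'd *)
definition universal_for :: "'a::ring set \<Rightarrow> 'a set \<Rightarrow> 'a set \<Rightarrow> ('a \<Rightarrow> 'a \<Rightarrow> 'a)
    \<Rightarrow> ('a \<Rightarrow> 'b::ring) \<Rightarrow> ('a \<Rightarrow> 'b) \<Rightarrow> ('a \<Rightarrow> 'b) \<Rightarrow> 'd::ring itself \<Rightarrow> bool" where
  "universal_for R P Q \<psi> iP iQ iR (_ :: 'd itself) \<longleftrightarrow>
     (\<forall>(S :: 'a \<Rightarrow> 'd) T \<sigma>. cov_rep R P Q \<psi> S T \<sigma> \<longrightarrow>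
        (\<exists>!\<phi>. rep_morph R P Q iP iQ iR S T \<sigma> \<phi>))"

definition toeplitz_rep where
  "toeplitz_rep R P Q \<psi> iP iQ iR \<longleftrightarrow>
     graded_cov_rep R P Q \<psi> iP iQ iR (toeplitz_grading R P Q iP iQ iR)"

(* f restricted to Q lies in F_P(Q) *)
definition in_FPQ :: "('a::ring \<Rightarrow> 'a \<Rightarrow> 'a) \<Rightarrow> 'a set \<Rightarrow> 'a set \<Rightarrow> ('a \<Rightarrow> 'a) \<Rightarrow> bool" where
  "in_FPQ \<psi> P Q f \<longleftrightarrow> (\<exists>l. set l \<subseteq> Q \<times> P \<and> (\<forall>y\<in>Q. f y = (\<Sum>(q,p)\<leftarrow>l. q * \<psi> p y)))"

(* g restricted to P lies in F_Q(P) *)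
definition in_FQP :: "('a::ring \<Rightarrow> 'a \<Rightarrow> 'a) \<Rightarrow> 'a set \<Rightarrow> 'a set \<Rightarrow> ('a \<Rightarrow> 'a) \<Rightarrow> bool" where
  "in_FQP \<psi> P Q g \<longleftrightarrow> (\<exists>l. set l \<subseteq> P \<times> Q \<and> (\<forall>y\<in>P. g y = (\<Sum>(p,q)\<leftarrow>l. \<psi> y q * p)))"

definition condition_FS where
  "condition_FS P Q \<psi> \<longleftrightarrow> (\<forall>Qs Ps. finite Qs \<and> Qs \<subseteq> Q \<and> finite Ps \<and> Ps \<subseteq> P \<longrightarrow>
      (\<exists>\<Theta>. in_FPQ \<psi> P Q \<Theta> \<and> (\<forall>q\<in>Qs. \<Theta> q = q))
    \<and> (\<exists>\<Phi>. in_FQP \<psi> P Q \<Phi> \<and> (\<forall>p\<in>Ps. \<Phi> p = p)))"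

definition psi_compatible where
  "psi_compatible R P Q \<psi> J \<longleftrightarrow> is_ideal R J \<and> (\<forall>x\<in>J. in_FPQ \<psi> P Q (\<lambda>y. x * y))"

definition faithful_ideal where
  "faithful_ideal Q J \<longleftrightarrow> (\<forall>x\<in>J. (\<forall>y\<in>Q. x * y = 0) \<longrightarrow> x = 0)"

definition maximal_cf_ideal where
  "maximal_cf_ideal R P Q \<psi> J \<longleftrightarrow> psi_compatible R P Q \<psi> J \<and> faithful_ideal Q J
     \<and> (\<forall>J'. psi_compatible R P Q \<psi> J' \<and> faithful_ideal Q J' \<and> J \<subseteq> J' \<longrightarrow> J' = J)"

definition CP_well_defined where
  "CP_well_defined R P Q \<psi> \<longleftrightarrow> (\<exists>!J. maximal_cf_ideal R P Q \<psi> J)"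

definition CP_ideal where
  "CP_ideal R P Q \<psi> = (THE J. maximal_cf_ideal R P Q \<psi> J)"

(* T(J): ideal generated by iota_R(x) - pi(Delta(x)), x \<in> J, where pi(sum theta_{q,p}) = sum iota_Q q iota_P p *)
definition toeplitz_ideal where
  "toeplitz_ideal R P Q \<psi> iP iQ iR J = gen_ideal UNIV
     {iR x - (\<Sum>(q,p)\<leftarrow>l. iQ q * iP p) | x l. x \<in> J \<and> set l \<subseteq> Q \<times> P
        \<and> (\<forall>y\<in>Q. x * y = (\<Sum>(q,p)\<leftarrow>l. q * \<psi> p y))}"

end

theory Submission
  imports Defs
begin

(*
  The inclusions of A_0, A_{-1}, A_1 form a covariant representation, surjective by
  semi-saturation, so universality yields a graded surjection canon from the Toeplitz ring
  onto A. Local units of the nearly epsilon-strong grading give Condition (FS), and the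
  unique maximal psi-compatible faithful ideal is J = {x in A_0 | Delta(x) in F_P(Q)} inter
  Ann^perp: faithfulness of J is exactly the pre-CP condition Ann inter Ann^perp = 0.
  It remains to show that the kernel of canon is the Cuntz-Pimsner ideal T(J).
  The generators of T(J) are mapped to elements of J killing A_1, hence to 0.
  Conversely let b be homogeneous with canon b = 0. In degree 0, b is a sum of balanced
  words iQ q_1 ... iQ q_k iR r iP p_k ... iP p_1, and modulo T(J) the Cuntz-Pimsner
  relations iQ q iP p = iR (q p) collapse each word to iR of its image under canon. In
  degree n > 0, a local unit sum q_i p_i from (FS) gives b = sum iQ q_i (iP p_i b), where
  each iP p_i b has degree n - 1 and lies in the kernel of canon; negative degrees are
  symmetric.
*)

lemma add_span_subset:
  assumes "add_subgroup S" "X \<subseteq> S"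
  shows "add_span X \<subseteq> S"
proof
  fix x assume "x \<in> add_span X"
  then show "x \<in> S"
    by induction (use assms in \<open>auto simp: add_subgroup_def\<close>)
qed

lemma add_span_mono: "X \<subseteq> Y \<Longrightarrow> add_span X \<subseteq> add_span Y"
  by (rule add_span_subset) (auto simp: add_subgroup_def intro: add_span.intros)

lemma add_subgroup_add_span: "add_subgroup (add_span X)"
  by (auto simp: add_subgroup_def intro: add_span.intros)

lemma add_span_eq_self: "add_subgroup S \<Longrightarrow> add_span S = S"
  using add_span_subset[of S S] by (auto intro: add_span.base)

lemma add_subgroup_diff: "add_subgroup S \<Longrightarrow> x \<in> S \<Longrightarrow> y \<in> S \<Longrightarrow> x - y \<in> S"
  by (metis add_subgroup_def diff_conv_add_uminus)

lemma add_subgroup_sum_list: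
  assumes "add_subgroup S" "\<And>x. x \<in> set xs \<Longrightarrow> f x \<in> S"
  shows "(\<Sum>x\<leftarrow>xs. f x) \<in> S"
  using assms(2) by (induction xs) (use assms(1) in \<open>auto simp: add_subgroup_def\<close>)

lemma add_subgroup_sum:
  assumes "add_subgroup S" "\<And>x. x \<in> A \<Longrightarrow> f x \<in> S"
  shows "sum f A \<in> S"
  using assms by (induction A rule: infinite_finite_induct) (auto simp: add_subgroup_def)

lemma add_span_lmult_closed:
  assumes "\<And>w. w \<in> W \<Longrightarrow> s * w \<in> W" "x \<in> add_span W"
  shows "s * x \<in> add_span W"
  using assms(2) by induction (auto intro: add_span.intros assms(1) simp: distrib_left)

lemma add_span_rmult_closed:
  assumes "\<And>w. w \<in> W \<Longrightarrow> w * s \<in> W" "x \<in> add_span W"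
  shows "x * s \<in> add_span W"
  using assms(2) by induction (auto intro: add_span.intros assms(1) simp: distrib_right)

lemma gen_ideal_eq_add_span:
  assumes "\<And>s w. s \<in> S \<Longrightarrow> w \<in> W \<Longrightarrow> s * w \<in> W \<and> w * s \<in> W"
  shows "gen_ideal S W = add_span W"
proof
  show "gen_ideal S W \<subseteq> add_span W"
  proof
    fix x assume "x \<in> gen_ideal S W"
    then show "x \<in> add_span W"
      by induction (auto intro: add_span.intros add_span_lmult_closed add_span_rmult_closed
          dest: assms)
  qed
  show "add_span W \<subseteq> gen_ideal S W"
    by (rule add_span_subset) (auto simp: add_subgroup_def intro: gen_ideal.intros)
qed

lemma is_ideal_Int: "is_ideal S I \<Longrightarrow> is_ideal S I' \<Longrightarrow> is_ideal S (I \<inter> I')"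
  by (auto simp: is_ideal_def add_subgroup_def)

lemma is_ideal_perp:
  assumes "subring S" "is_ideal S I"
  shows "is_ideal S (perp S I)"
proof -
  have S: "add_subgroup S" "\<And>x y. x \<in> S \<Longrightarrow> y \<in> S \<Longrightarrow> x * y \<in> S"
    using assms(1) by (auto simp: subring_def)
  have I: "\<And>s a. s \<in> S \<Longrightarrow> a \<in> I \<Longrightarrow> s * a \<in> I \<and> a * s \<in> I"
    using assms(2) by (auto simp: is_ideal_def)
  have "s * x \<in> perp S I \<and> x * s \<in> perp S I" if "s \<in> S" "x \<in> perp S I" for s x
    using that S(2) I by (auto simp: perp_def mult.assoc) (metis mult.assoc)+
  then show ?thesis
    using S(1) by (auto simp: is_ideal_def add_subgroup_def perp_def distrib_left distrib_right)
qed

lemma setprod_obtain_list: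
  assumes "x \<in> setprod X Y" and neg_closed: "\<And>a. a \<in> X \<Longrightarrow> - a \<in> X"
  obtains l where "set l \<subseteq> X \<times> Y" "x = (\<Sum>(a,b)\<leftarrow>l. a * b)"
proof -
  have "x \<in> add_span {x * y | x y. x \<in> X \<and> y \<in> Y}" using assms(1) by (simp add: setprod_def)
  then have "\<exists>l. set l \<subseteq> X \<times> Y \<and> x = (\<Sum>(a,b)\<leftarrow>l. a * b)"
  proof induction
    case (base x)
    then obtain a b where "x = a * b" "a \<in> X" "b \<in> Y" by auto
    then show ?case by (intro exI[of _ "[(a,b)]"]) auto
  next
    case zero
    show ?case by (intro exI[of _ "[]"]) auto
  next
    case (add x y)
    then obtain l1 l2 where "set l1 \<subseteq> X \<times> Y" "x = (\<Sum>(a,b)\<leftarrow>l1. a * b)"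
      "set l2 \<subseteq> X \<times> Y" "y = (\<Sum>(a,b)\<leftarrow>l2. a * b)" by blast
    then show ?case by (intro exI[of _ "l1 @ l2"]) auto
  next
    case (neg x)
    then obtain l where l: "set l \<subseteq> X \<times> Y" "x = (\<Sum>(a,b)\<leftarrow>l. a * b)" by blast
    have "- x = (\<Sum>(a,b)\<leftarrow>map (\<lambda>(a,b). (-a,b)) l. a * b)"
      unfolding l(2) by (induction l) auto
    then show ?case using l(1) neg_closed by (intro exI[of _ "map (\<lambda>(a,b). (-a,b)) l"]) auto
  qed
  then show thesis using that by blast
qed

lemma sum_list_in_setprod: "set l \<subseteq> X \<times> Y \<Longrightarrow> (\<Sum>(a,b)\<leftarrow>l. a * b) \<in> setprod X Y"
  unfolding setprod_def
  by (rule add_subgroup_sum_list[OF add_subgroup_add_span]) (auto intro: add_span.base)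

lemma add_subgroup_setprod: "add_subgroup (setprod X Y)"
  unfolding setprod_def by (rule add_subgroup_add_span)

lemma setprod_subset:
  "add_subgroup S \<Longrightarrow> (\<And>x y. x \<in> X \<Longrightarrow> y \<in> Y \<Longrightarrow> x * y \<in> S) \<Longrightarrow> setprod X Y \<subseteq> S"
  unfolding setprod_def by (rule add_span_subset) auto

lemma setprod_lmult_closed:
  assumes "\<And>x. x \<in> X \<Longrightarrow> s * x \<in> X" "u \<in> setprod X Y"
  shows "s * u \<in> setprod X Y"
proof -
  have "s * (x * y) \<in> {x * y | x y. x \<in> X \<and> y \<in> Y}" if "x \<in> X" "y \<in> Y" for x y
    unfolding mult.assoc[symmetric] using assms(1)[OF that(1)] that(2) by blast
  then show ?thesis using assms(2) unfolding setprod_def by (intro add_span_lmult_closed) auto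
qed

lemma setprod_rmult_closed:
  assumes "\<And>y. y \<in> Y \<Longrightarrow> y * s \<in> Y" "u \<in> setprod X Y"
  shows "u * s \<in> setprod X Y"
proof -
  have "x * y * s \<in> {x * y | x y. x \<in> X \<and> y \<in> Y}" if "x \<in> X" "y \<in> Y" for x y
    unfolding mult.assoc using assms(1)[OF that(2)] that(1) by blast
  then show ?thesis using assms(2) unfolding setprod_def by (intro add_span_rmult_closed) auto
qed

lemma setprod_add_span:
  "setprod (add_span A) (add_span B) = add_span {a * b | a b. a \<in> A \<and> b \<in> B}"
proof
  let ?W = "{a * b | a b. a \<in> A \<and> b \<in> B}"
  have "x * y \<in> add_span ?W" if x: "x \<in> add_span A" and y: "y \<in> add_span B" for x y
    using x
  proof induction
    case (base a)
    show ?case using y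
    proof induction
      case (base b) then show ?case using \<open>a \<in> A\<close> by (auto intro: add_span.base)
    qed (auto intro: add_span.intros simp: distrib_left)
  qed (auto intro: add_span.intros simp: distrib_right)
  then show "setprod (add_span A) (add_span B) \<subseteq> add_span ?W"
    unfolding setprod_def by (intro add_span_subset[OF add_subgroup_add_span]) auto
  show "add_span ?W \<subseteq> setprod (add_span A) (add_span B)"
    unfolding setprod_def by (rule add_span_mono) (auto intro: add_span.base)
qed

lemma sum_list_pair_mult_right:
  "(\<Sum>(a,b)\<leftarrow>l. a * b) * (y::'a::ring) = (\<Sum>(a,b)\<leftarrow>l. a * (b * y))"
  by (induction l) (auto simp: distrib_right mult.assoc)

lemma sum_list_pair_mult_left:
  "(y::'a::ring) * (\<Sum>(a,b)\<leftarrow>l. a * b) = (\<Sum>(a,b)\<leftarrow>l. (y * a) * b)"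
  by (induction l) (auto simp: distrib_left mult.assoc)

lemma additive_on_zero:
  assumes "add_subgroup S" "\<And>x y. x \<in> S \<Longrightarrow> y \<in> S \<Longrightarrow> f (x + y) = f x + f y"
  shows "f 0 = (0::'b::ring)"
  using assms by (metis add_cancel_right_right add_subgroup_def)

lemma additive_on_uminus:
  assumes "add_subgroup S" "\<And>x y. x \<in> S \<Longrightarrow> y \<in> S \<Longrightarrow> f (x + y) = f x + f y" "x \<in> S"
  shows "f (- x) = - (f x :: 'b::ring)"
proof -
  have "f x + f (- x) = 0"
    using assms additive_on_zero[OF assms(1,2)] by (metis add_subgroup_def add.right_inverse)
  then show ?thesis by (simp add: eq_neg_iff_add_eq_0 add.commute)
qed

lemma ring_hom_add: "ring_hom f \<Longrightarrow> f (x + y) = f x + f y"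
  by (simp add: ring_hom_def)

lemma ring_hom_mult: "ring_hom f \<Longrightarrow> f (x * y) = f x * f y"
  by (simp add: ring_hom_def)

lemma ring_hom_zero: "ring_hom f \<Longrightarrow> f 0 = 0"
  by (metis add_cancel_left_right add_0 ring_hom_add)

lemma ring_hom_uminus: "ring_hom f \<Longrightarrow> f (- x) = - f x"
  by (metis add.right_inverse add_eq_0_iff ring_hom_add ring_hom_zero)

lemma ring_hom_diff: "ring_hom f \<Longrightarrow> f (x - y) = f x - f y"
  by (metis diff_conv_add_uminus ring_hom_add ring_hom_uminus)

lemma ring_hom_sum: "ring_hom f \<Longrightarrow> f (sum g A) = (\<Sum>x\<in>A. f (g x))"
  by (induction A rule: infinite_finite_induct) (auto simp: ring_hom_zero ring_hom_add)

lemmas ring_hom_simps =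
  ring_hom_add ring_hom_mult ring_hom_zero ring_hom_uminus ring_hom_diff

lemma nprod_Cons: "xs \<noteq> [] \<Longrightarrow> nprod (x # xs) = x * nprod xs"
  by (cases xs) auto

lemma nprod_snoc: "xs \<noteq> [] \<Longrightarrow> nprod (xs @ [x]) = nprod xs * x"
  by (induction xs rule: nprod.induct) (auto simp: mult.assoc)

lemma nprod_lmult: "s * nprod (x # xs) = nprod ((s * x) # xs)"
  by (cases xs) (auto simp: mult.assoc)

lemma nprod_rmult: "nprod (xs @ [x]) * s = nprod (xs @ [x * s])"
  by (cases "xs = []") (auto simp: nprod_snoc mult.assoc)

lemma ring_hom_nprod: "ring_hom h \<Longrightarrow> h (nprod xs) = nprod (map h xs)"
  by (induction xs rule: nprod.induct) (auto simp: ring_hom_zero ring_hom_mult)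

lemma psi_list_mult:
  "length ps = length qs \<Longrightarrow> ps \<noteq> [] \<Longrightarrow>
    psi_list (\<lambda>a b. a * b) ps qs = nprod ps * nprod (rev qs)"
proof (induction "\<lambda>a b. a * (b::'a::ring)" ps qs rule: psi_list.induct)
  case (2 p p' ps q q' qs)
  then show ?case using nprod_snoc[of "rev qs @ [q']" q] by (simp add: mult.assoc)
qed auto

lemma setpow_eq_add_span_nprod:
  assumes "add_subgroup X"
  shows "setpow X (Suc m) = add_span {nprod xs | xs. length xs = Suc m \<and> set xs \<subseteq> X}"
proof (induction m)
  case 0
  have "{nprod xs | xs. length xs = Suc 0 \<and> set xs \<subseteq> X} = X"
    by (force simp: length_Suc_conv)
  then show ?case using add_span_eq_self[OF assms] by simp
next
  case (Suc m)
  have "{a * b | a b. a \<in> X \<and> b \<in> {nprod xs | xs. length xs = Suc m \<and> set xs \<subseteq> X}}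
      = {nprod xs | xs. length xs = Suc (Suc m) \<and> set xs \<subseteq> X}"
  proof (intro set_eqI iffI)
    fix z assume "z \<in> {a * b | a b. a \<in> X \<and> b \<in> {nprod xs | xs. length xs = Suc m \<and> set xs \<subseteq> X}}"
    then obtain a xs where "z = a * nprod xs" "a \<in> X" "length xs = Suc m" "set xs \<subseteq> X"
      by blast
    then have "z = nprod (a # xs)" "length (a # xs) = Suc (Suc m)" "set (a # xs) \<subseteq> X"
      by (cases xs; simp)+
    then show "z \<in> {nprod xs | xs. length xs = Suc (Suc m) \<and> set xs \<subseteq> X}" by blast
  next
    fix z assume "z \<in> {nprod xs | xs. length xs = Suc (Suc m) \<and> set xs \<subseteq> X}"
    then obtain a xs where "z = a * nprod xs" "a \<in> X" "length xs = Suc m" "set xs \<subseteq> X"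
      by (auto simp: length_Suc_conv)
    then show "z \<in> {a * b | a b. a \<in> X \<and> b \<in> {nprod xs | xs. length xs = Suc m \<and> set xs \<subseteq> X}}"
      by blast
  qed
  moreover have "setpow X (Suc (Suc m)) = setprod (add_span X) (setpow X (Suc m))"
    using add_span_eq_self[OF assms] by simp
  ultimately show ?case unfolding Suc setprod_add_span by simp
qed

lemma add_subgroup_gen_subring: "add_subgroup (gen_subring X)"
  by (auto simp: add_subgroup_def intro: gen_subring.intros)

lemma setpow_subset_gen_subring: "Y \<subseteq> gen_subring X \<Longrightarrow> setpow Y n \<subseteq> gen_subring X"
proof (induction Y n rule: setpow.induct)
  case (1 Y)
  show ?case by (simp add: add_span_subset add_subgroup_gen_subring)
next
  case (3 Y n)
  then have "setpow Y (Suc n) \<subseteq> gen_subring X" by simp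
  with 3(2) have "setprod Y (setpow Y (Suc n)) \<subseteq> gen_subring X"
    by (intro setprod_subset add_subgroup_gen_subring) (blast intro: gen_subring.mult)
  then show ?case by simp
qed simp

section \<open>Pre-CP rings\<close>

locale pre_CP_ring =
  fixes G :: "int \<Rightarrow> 'a::ring set"
  assumes pre_CP: "pre_CP G"
begin

abbreviation R :: "'a set" where "R \<equiv> G 0"
abbreviation P :: "'a set" where "P \<equiv> G (-1)"
abbreviation Q :: "'a set" where "Q \<equiv> G 1"

lemma Z_graded_G: "Z_graded G"
  using pre_CP by (simp add: pre_CP_def)

lemma add_subgroup_component: "add_subgroup (G i)"
  using Z_graded_G by (simp add: Z_graded_def)

lemma mult_component: "x \<in> G i \<Longrightarrow> y \<in> G j \<Longrightarrow> x * y \<in> G (i + j)"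
  using Z_graded_G by (simp add: Z_graded_def)

lemma zero_component: "0 \<in> G i"
  using add_subgroup_component by (simp add: add_subgroup_def)

lemma add_component: "x \<in> G i \<Longrightarrow> y \<in> G i \<Longrightarrow> x + y \<in> G i"
  using add_subgroup_component by (simp add: add_subgroup_def)

lemma uminus_component: "x \<in> G i \<Longrightarrow> - x \<in> G i"
  using add_subgroup_component by (simp add: add_subgroup_def)

lemma diff_component: "x \<in> G i \<Longrightarrow> y \<in> G i \<Longrightarrow> x - y \<in> G i"
  using add_subgroup_component add_subgroup_diff by blast

lemma mult_RR: "x \<in> R \<Longrightarrow> y \<in> R \<Longrightarrow> x * y \<in> R" using mult_component[of x 0 y 0] by simp
lemma mult_QP: "x \<in> Q \<Longrightarrow> y \<in> P \<Longrightarrow> x * y \<in> R" using mult_component[of x 1 y "-1"] by simp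
lemma mult_PQ: "x \<in> P \<Longrightarrow> y \<in> Q \<Longrightarrow> x * y \<in> R" using mult_component[of x "-1" y 1] by simp
lemma mult_RQ: "x \<in> R \<Longrightarrow> y \<in> Q \<Longrightarrow> x * y \<in> Q" using mult_component[of x 0 y 1] by simp
lemma mult_QR: "x \<in> Q \<Longrightarrow> y \<in> R \<Longrightarrow> x * y \<in> Q" using mult_component[of x 1 y 0] by simp
lemma mult_RP: "x \<in> R \<Longrightarrow> y \<in> P \<Longrightarrow> x * y \<in> P" using mult_component[of x 0 y "-1"] by simp
lemma mult_PR: "x \<in> P \<Longrightarrow> y \<in> R \<Longrightarrow> x * y \<in> P" using mult_component[of x "-1" y 0] by simp

lemma subring_R: "subring R"
  unfolding subring_def using add_subgroup_component mult_RR by blast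

lemma setprod_opposite_subset_R: "setprod (G i) (G (- i)) \<subseteq> R"
  by (rule setprod_subset[OF add_subgroup_component]) (use mult_component in force)

lemma local_units:
  assumes "x \<in> G i"
  shows "\<exists>e\<in>setprod (G i) (G (- i)). e * x = x" "\<exists>e\<in>setprod (G (- i)) (G i). x * e = x"
  using pre_CP assms unfolding pre_CP_def nearly_eps_strongly_graded_def s_unital_bimod_def
  by (metis minus_minus)+

lemma s_unital_component: "s_unital_bimod R (G i) R"
  unfolding s_unital_bimod_def
  using local_units setprod_opposite_subset_R[of i] setprod_opposite_subset_R[of "- i"] by force

lemma setprod_QP_subset_R: "setprod Q P \<subseteq> R"
  using setprod_opposite_subset_R[of 1] by simp

lemma setprod_QP_obtain_list:
  assumes "u \<in> setprod Q P"
  obtains l where "set l \<subseteq> Q \<times> P" "u = (\<Sum>(a,b)\<leftarrow>l. a * b)"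
  using setprod_obtain_list[OF assms uminus_component] by blast

lemma setprod_QP_mult: "u \<in> setprod Q P \<Longrightarrow> v \<in> setprod Q P \<Longrightarrow> u * v \<in> setprod Q P"
  using setprod_rmult_closed[of P v] setprod_QP_subset_R mult_PR by blast

text \<open>Local units of finitely many elements are built one element at a time: if u' is a unit
  for F and e one for a - u' a, then u' + e - e u' is one for F and a.\<close>

lemma QP_left_unit:
  assumes "finite F" "F \<subseteq> Q"
  shows "\<exists>u\<in>setprod Q P. \<forall>q\<in>F. u * q = q"
  using assms
proof (induction F rule: finite_induct)
  case empty
  then show ?case using add_subgroup_setprod by (auto simp: add_subgroup_def)
next
  case (insert a F)
  then obtain u' where u': "u' \<in> setprod Q P" "\<forall>q\<in>F. u' * q = q" by auto
  have "u' * a \<in> Q" using insert.prems u'(1) setprod_QP_subset_R mult_RQ by auto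
  then have "a - u' * a \<in> Q" using insert.prems diff_component by auto
  then obtain e where e: "e \<in> setprod Q P" "e * (a - u' * a) = a - u' * a"
    using local_units(1)[of _ 1] by auto
  have "u' + e - e * u' \<in> setprod Q P"
    using u'(1) e(1) setprod_QP_mult add_subgroup_setprod
    by (metis add_subgroup_def add_subgroup_diff)
  moreover have "(u' + e - e * u') * a = a"
    using e(2) by (simp add: algebra_simps)
  moreover have "\<forall>q\<in>F. (u' + e - e * u') * q = q"
    using u'(2) by (simp add: algebra_simps mult.assoc)
  ultimately show ?case by auto
qed

lemma QP_right_unit:
  assumes "finite F" "F \<subseteq> P"
  shows "\<exists>u\<in>setprod Q P. \<forall>p\<in>F. p * u = p"
  using assms
proof (induction F rule: finite_induct)
  case empty
  then show ?case using add_subgroup_setprod by (auto simp: add_subgroup_def)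
next
  case (insert a F)
  then obtain u' where u': "u' \<in> setprod Q P" "\<forall>p\<in>F. p * u' = p" by auto
  have "a * u' \<in> P" using insert.prems u'(1) setprod_QP_subset_R mult_PR by auto
  then have "a - a * u' \<in> P" using insert.prems diff_component by auto
  then obtain e where e: "e \<in> setprod Q P" "(a - a * u') * e = a - a * u'"
    using local_units(2)[of _ "-1"] by auto
  have "u' + e - u' * e \<in> setprod Q P"
    using u'(1) e(1) setprod_QP_mult add_subgroup_setprod
    by (metis add_subgroup_def add_subgroup_diff)
  moreover have "a * (u' + e - u' * e) = a"
    using e(2) by (simp add: algebra_simps mult.assoc)
  moreover have "\<forall>p\<in>F. p * (u' + e - u' * e) = p"
    using u'(2) by (simp add: algebra_simps mult.assoc[symmetric])
  ultimately show ?case by auto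
qed

lemma s_unital_system: "s_unital_system R P Q (\<lambda>a b. a * b)"
proof -
  have "R_system R P Q (\<lambda>a b. a * b)"
    unfolding R_system_def bimodule_def
    using subring_R add_subgroup_component mult_RP mult_PR mult_RQ mult_QR mult_PQ
    by (simp add: distrib_left distrib_right mult.assoc)
  then show ?thesis
    unfolding s_unital_system_def using s_unital_component by blast
qed

lemma in_FPQ_mult_iff:
  "in_FPQ (\<lambda>a b. a * b) P Q (\<lambda>y. x * y) \<longleftrightarrow> (\<exists>u\<in>setprod Q P. \<forall>y\<in>Q. x * y = u * y)"
proof
  assume "in_FPQ (\<lambda>a b. a * b) P Q (\<lambda>y. x * y)"
  then obtain l where "set l \<subseteq> Q \<times> P" "\<forall>y\<in>Q. x * y = (\<Sum>(q,p)\<leftarrow>l. q * (p * y))"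
    by (auto simp: in_FPQ_def)
  then show "\<exists>u\<in>setprod Q P. \<forall>y\<in>Q. x * y = u * y"
    using sum_list_in_setprod sum_list_pair_mult_right by metis
next
  assume "\<exists>u\<in>setprod Q P. \<forall>y\<in>Q. x * y = u * y"
  then obtain u l where "\<forall>y\<in>Q. x * y = u * y" "set l \<subseteq> Q \<times> P" "u = (\<Sum>(a,b)\<leftarrow>l. a * b)"
    using setprod_QP_obtain_list by metis
  then show "in_FPQ (\<lambda>a b. a * b) P Q (\<lambda>y. x * y)"
    unfolding in_FPQ_def by (intro exI[of _ l]) (simp add: sum_list_pair_mult_right)
qed

lemma in_FQP_right_mult:
  assumes "u \<in> setprod Q P"
  shows "in_FQP (\<lambda>a b. a * b) P Q (\<lambda>y. y * u)"
proof -
  obtain l where l: "set l \<subseteq> Q \<times> P" "u = (\<Sum>(a,b)\<leftarrow>l. a * b)"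
    using setprod_QP_obtain_list[OF assms] .
  have "y * u = (\<Sum>(p,q)\<leftarrow>map (\<lambda>(a,b). (b,a)) l. (y * q) * p)" for y
    unfolding l(2) sum_list_pair_mult_left by (induction l) auto
  then show ?thesis
    unfolding in_FQP_def using l(1) by (intro exI[of _ "map (\<lambda>(a,b). (b,a)) l"]) auto
qed

lemma condition_FS: "condition_FS P Q (\<lambda>a b. a * b)"
  unfolding condition_FS_def
proof (intro allI impI conjI)
  fix Qs Ps assume fin: "finite Qs \<and> Qs \<subseteq> Q \<and> finite Ps \<and> Ps \<subseteq> P"
  obtain u where "u \<in> setprod Q P" "\<forall>q\<in>Qs. u * q = q"
    using QP_left_unit fin by blast
  then show "\<exists>\<Theta>. in_FPQ (\<lambda>a b. a * b) P Q \<Theta> \<and> (\<forall>q\<in>Qs. \<Theta> q = q)"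
    by (intro exI[of _ "\<lambda>y. u * y"]) (auto simp: in_FPQ_mult_iff)
  obtain v where "v \<in> setprod Q P" "\<forall>p\<in>Ps. p * v = p"
    using QP_right_unit fin by blast
  then show "\<exists>\<Phi>. in_FQP (\<lambda>a b. a * b) P Q \<Phi> \<and> (\<forall>p\<in>Ps. \<Phi> p = p)"
    by (intro exI[of _ "\<lambda>y. y * v"]) (simp add: in_FQP_right_mult)
qed

lemma component_eq_setpow:
  assumes "n > 0"
  shows "G (int n) = setpow Q n" "G (- int n) = setpow P n"
  using pre_CP assms by (simp_all add: pre_CP_def semi_saturated_def)

lemma component_subset_gen_subring: "G i \<subseteq> gen_subring (R \<union> P \<union> Q)"
proof -
  have RPQ: "R \<subseteq> gen_subring (R \<union> P \<union> Q)" "P \<subseteq> gen_subring (R \<union> P \<union> Q)"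
    "Q \<subseteq> gen_subring (R \<union> P \<union> Q)"
    by (auto intro: gen_subring.base)
  obtain n where n: "i = int n \<or> i = - int n"
    by (metis int_cases)
  show ?thesis
  proof (cases "n = 0")
    case True
    then show ?thesis using n RPQ(1) by auto
  next
    case False
    with n show ?thesis
      using component_eq_setpow setpow_subset_gen_subring[OF RPQ(2)]
        setpow_subset_gen_subring[OF RPQ(3)] by (elim disjE) simp_all
  qed
qed

lemma graded_decomposition:
  obtains f where "finite {i. f i \<noteq> 0}" "\<forall>i. f i \<in> G i" "x = (\<Sum>i\<in>{i. f i \<noteq> 0}. f i)"
  using Z_graded_G unfolding Z_graded_def by blast

lemma gen_subring_eq_UNIV: "gen_subring (R \<union> P \<union> Q) = UNIV"
proof -
  have "x \<in> gen_subring (R \<union> P \<union> Q)" for x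
  proof -
    obtain f where f: "\<forall>i. f i \<in> G i" "x = (\<Sum>i\<in>{i. f i \<noteq> 0}. f i)"
      using graded_decomposition by blast
    show ?thesis
      unfolding f(2) by (rule add_subgroup_sum[OF add_subgroup_gen_subring])
        (use f(1) component_subset_gen_subring in blast)
  qed
  then show ?thesis by auto
qed

lemma surj_cov_rep_id: "surj_cov_rep R P Q (\<lambda>a b. a * b) id id id"
  unfolding surj_cov_rep_def cov_rep_def using gen_subring_eq_UNIV by simp

lemma graded_decomposition_unique:
  assumes "finite S" "\<forall>j. g j \<in> G j" "\<forall>j. j \<notin> S \<longrightarrow> g j = 0"
    and "finite S'" "\<forall>j. h j \<in> G j" "\<forall>j. j \<notin> S' \<longrightarrow> h j = 0"
    and "sum g S = sum h S'"
  shows "g = h"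
proof -
  have supp: "finite {j. f j \<noteq> 0} \<and> sum f {j. f j \<noteq> 0} = sum f T"
    if "finite T" "\<forall>j. j \<notin> T \<longrightarrow> f j = 0" for f :: "int \<Rightarrow> 'a" and T
  proof
    have "{j. f j \<noteq> 0} \<subseteq> T" using that(2) by auto
    then show "finite {j. f j \<noteq> 0}" "sum f {j. f j \<noteq> 0} = sum f T"
      using that(1) finite_subset by (auto intro: sum.mono_neutral_left)
  qed
  have "\<exists>!f. finite {i. f i \<noteq> 0} \<and> (\<forall>i. f i \<in> G i) \<and> sum g S = (\<Sum>i\<in>{i. f i \<noteq> 0}. f i)"
    using Z_graded_G by (simp add: Z_graded_def)
  then show ?thesis
    using supp[OF assms(1,3)] supp[OF assms(4,6)] assms(2,5,7) by metis
qed

section \<open>The Cuntz-Pimsner ideal of a pre-CP ring\<close>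

abbreviation Ann :: "'a set" where "Ann \<equiv> ann0 G"

lemma Ann_mult_Q: "a \<in> Ann \<Longrightarrow> y \<in> Q \<Longrightarrow> a * y = 0"
  by (simp add: ann0_def)

lemma is_ideal_Ann: "is_ideal R Ann"
  using mult_RR mult_RQ add_subgroup_component
  by (auto simp: is_ideal_def ann0_def add_subgroup_def distrib_right mult.assoc)

text \<open>A right local unit of p a lies in Q P, and a kills Q.\<close>

lemma P_mult_Ann: assumes "p \<in> P" "a \<in> Ann" shows "p * a = 0"
proof -
  have "p * a \<in> P" using assms mult_PR by (simp add: ann0_def)
  then obtain e where e: "e \<in> setprod Q P" "p * a * e = p * a"
    using local_units(2)[of _ "-1"] by auto
  obtain l where l: "set l \<subseteq> Q \<times> P" "e = (\<Sum>(x,y)\<leftarrow>l. x * y)"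
    using setprod_QP_obtain_list[OF e(1)] .
  have "p * a * e = (\<Sum>(x,y)\<leftarrow>l. (p * a * x) * y)"
    unfolding l(2) by (rule sum_list_pair_mult_left)
  also have "\<dots> = 0"
    using l(1) Ann_mult_Q[OF assms(2)] by (induction l) (auto simp: mult.assoc)
  finally show ?thesis using e(2) by simp
qed

lemma Ann_inter_perp: "x \<in> Ann \<Longrightarrow> x \<in> perp R Ann \<Longrightarrow> x = 0"
  using pre_CP by (auto simp: pre_CP_def)

definition J :: "'a set" where
  "J = {x \<in> R. in_FPQ (\<lambda>a b. a * b) P Q (\<lambda>y. x * y)} \<inter> perp R Ann"

lemma is_ideal_in_FPQ: "is_ideal R {x \<in> R. in_FPQ (\<lambda>a b. a * b) P Q (\<lambda>y. x * y)}"
  unfolding in_FPQ_mult_iff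
proof -
  let ?C = "{x \<in> R. \<exists>u\<in>setprod Q P. \<forall>y\<in>Q. x * y = u * y}"
  have S: "0 \<in> setprod Q P" "\<And>u v. u \<in> setprod Q P \<Longrightarrow> v \<in> setprod Q P \<Longrightarrow> u + v \<in> setprod Q P"
    "\<And>u. u \<in> setprod Q P \<Longrightarrow> - u \<in> setprod Q P"
    using add_subgroup_setprod[of Q P] by (auto simp: add_subgroup_def)
  have "0 \<in> ?C" using S(1) zero_component by force
  moreover have "x + x' \<in> ?C" if C: "x \<in> ?C" "x' \<in> ?C" for x x'
  proof -
    obtain u u' where "u \<in> setprod Q P" "\<forall>y\<in>Q. x * y = u * y"
      "u' \<in> setprod Q P" "\<forall>y\<in>Q. x' * y = u' * y" using C by blast
    then show ?thesis using C S(2) add_component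
      by (auto simp: distrib_right intro!: bexI[of _ "u + u'"])
  qed
  moreover have "- x \<in> ?C" if C: "x \<in> ?C" for x
  proof -
    obtain u where "u \<in> setprod Q P" "\<forall>y\<in>Q. x * y = u * y" using C by blast
    then show ?thesis using C S(3) uminus_component by (auto intro!: bexI[of _ "- u"])
  qed
  moreover have "s * x \<in> ?C \<and> x * s \<in> ?C" if s: "s \<in> R" and C: "x \<in> ?C" for s x
  proof -
    obtain u where u: "u \<in> setprod Q P" "\<forall>y\<in>Q. x * y = u * y" using C by blast
    have "s * u \<in> setprod Q P" "u * s \<in> setprod Q P"
      using u(1) s mult_RQ mult_PR by (auto intro: setprod_lmult_closed setprod_rmult_closed)
    moreover have "\<forall>y\<in>Q. s * x * y = s * u * y" "\<forall>y\<in>Q. x * s * y = u * s * y"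
      using u(2) s mult_RQ by (simp_all add: mult.assoc)
    ultimately show ?thesis using s C mult_RR by blast
  qed
  ultimately show "is_ideal R ?C" by (auto simp: is_ideal_def add_subgroup_def)
qed

lemma is_ideal_J: "is_ideal R J"
  unfolding J_def
  using is_ideal_Int is_ideal_in_FPQ is_ideal_perp[OF subring_R is_ideal_Ann] by blast

lemma setprod_QP_subset_J: "setprod Q P \<subseteq> J"
proof (rule setprod_subset)
  show "add_subgroup J" using is_ideal_J by (simp add: is_ideal_def)
  fix q p assume qp: "q \<in> Q" "p \<in> P"
  have "q * p \<in> setprod Q P" using qp sum_list_in_setprod[of "[(q,p)]"] by simp
  moreover have "q * p * a = 0 \<and> a * (q * p) = 0" if "a \<in> Ann" for a
  proof -
    have "q * p * a = q * (p * a)" "a * (q * p) = a * q * p" by (simp_all add: mult.assoc)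
    then show ?thesis using P_mult_Ann[OF qp(2) that] Ann_mult_Q[OF that qp(1)] by simp
  qed
  ultimately show "q * p \<in> J"
    unfolding J_def in_FPQ_mult_iff perp_def using qp mult_QP by blast
qed

lemma faithful_J: "faithful_ideal Q J"
  unfolding faithful_ideal_def J_def using Ann_inter_perp by (auto simp: ann0_def)

lemma compatible_faithful_subset_J:
  assumes "psi_compatible R P Q (\<lambda>a b. a * b) I" "faithful_ideal Q I"
  shows "I \<subseteq> J"
proof
  fix x assume x: "x \<in> I"
  have I: "I \<subseteq> R" "\<And>s. s \<in> R \<Longrightarrow> s * x \<in> I \<and> x * s \<in> I"
    using assms(1) x by (auto simp: psi_compatible_def is_ideal_def)
  have "x * a = 0 \<and> a * x = 0" if a: "a \<in> Ann" for a
  proof -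
    have "a \<in> R" using a by (simp add: ann0_def)
    moreover have "\<forall>y\<in>Q. x * a * y = 0" "\<forall>y\<in>Q. a * x * y = 0"
      using Ann_mult_Q[OF a] mult_RQ I(1) x by (simp_all add: mult.assoc subset_iff)
    ultimately show ?thesis using I(2) assms(2) by (simp add: faithful_ideal_def)
  qed
  then show "x \<in> J"
    using x I(1) assms(1) by (auto simp: J_def perp_def psi_compatible_def)
qed

lemma maximal_cf_ideal_J: "maximal_cf_ideal R P Q (\<lambda>a b. a * b) J"
  unfolding maximal_cf_ideal_def psi_compatible_def
  using is_ideal_J faithful_J compatible_faithful_subset_J
  by (auto simp: J_def psi_compatible_def)

lemma maximal_cf_ideal_eq_J: "maximal_cf_ideal R P Q (\<lambda>a b. a * b) I \<Longrightarrow> I = J"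
  using compatible_faithful_subset_J maximal_cf_ideal_J unfolding maximal_cf_ideal_def by blast

lemma CP_well_defined: "CP_well_defined R P Q (\<lambda>a b. a * b)"
  unfolding CP_well_defined_def by (rule ex1I, rule maximal_cf_ideal_J, rule maximal_cf_ideal_eq_J)

lemma CP_ideal_eq_J: "CP_ideal R P Q (\<lambda>a b. a * b) = J"
  unfolding CP_ideal_def by (rule the_equality, rule maximal_cf_ideal_J, rule maximal_cf_ideal_eq_J)

section \<open>Semi-fullness of a pre-CP ring\<close>

definition PQ_products :: "nat \<Rightarrow> 'a set" where
  "PQ_products k = {nprod ps * nprod qs | ps qs.
     length ps = k \<and> length qs = k \<and> set ps \<subseteq> P \<and> set qs \<subseteq> Q}"

lemma setprod_neg_pos_component:
  assumes "k > 0"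
  shows "setprod (G (- int k)) (G (int k)) = add_span (PQ_products k)"
proof -
  obtain m where k: "k = Suc m" using assms by (cases k) auto
  have setpow_k: "setpow X k = add_span {nprod xs | xs. length xs = k \<and> set xs \<subseteq> X}"
    if "add_subgroup X" for X
    using setpow_eq_add_span_nprod[OF that, of m] k by simp
  have "G (- int k) = add_span {nprod xs | xs. length xs = k \<and> set xs \<subseteq> P}"
    "G (int k) = add_span {nprod xs | xs. length xs = k \<and> set xs \<subseteq> Q}"
    using component_eq_setpow[OF assms] setpow_k[OF add_subgroup_component] by simp_all
  then have "setprod (G (- int k)) (G (int k)) = add_span {a * b | a b.
      a \<in> {nprod xs | xs. length xs = k \<and> set xs \<subseteq> P} \<and>
      b \<in> {nprod xs | xs. length xs = k \<and> set xs \<subseteq> Q}}"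
    by (simp add: setprod_add_span)
  also have "\<dots> = add_span (PQ_products k)"
    unfolding PQ_products_def by (rule arg_cong[of _ _ add_span]) blast
  finally show ?thesis .
qed

lemma psi_vals_eq_PQ_products:
  assumes "k > 0"
  shows "psi_vals R P Q (\<lambda>a b. a * b) k = PQ_products k"
proof (intro set_eqI iffI)
  fix z assume "z \<in> psi_vals R P Q (\<lambda>a b. a * b) k"
  then obtain ps qs where z: "z = psi_list (\<lambda>a b. a * b) ps qs" "length ps = k" "length qs = k"
    "set ps \<subseteq> P" "set qs \<subseteq> Q"
    using assms by (auto simp: psi_vals_def)
  then have "z = nprod ps * nprod (rev qs)" using psi_list_mult[of ps qs] assms by auto
  then show "z \<in> PQ_products k"
    unfolding PQ_products_def using z(2-5) by (intro CollectI exI[of _ ps] exI[of _ "rev qs"]) auto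
next
  fix z assume "z \<in> PQ_products k"
  then obtain ps qs where z: "z = nprod ps * nprod qs" "length ps = k" "length qs = k"
    "set ps \<subseteq> P" "set qs \<subseteq> Q"
    by (auto simp: PQ_products_def)
  moreover have "z = psi_list (\<lambda>a b. a * b) ps (rev qs)"
    using z psi_list_mult[of ps "rev qs"] assms by auto
  moreover have "length (rev qs) = k" "set (rev qs) \<subseteq> Q" using z by auto
  ultimately have "z \<in> {psi_list (\<lambda>a b. a * b) ps qs | ps qs.
      length ps = k \<and> length qs = k \<and> set ps \<subseteq> P \<and> set qs \<subseteq> Q}"
    using z(2,4) by blast
  then show "z \<in> psi_vals R P Q (\<lambda>a b. a * b) k"
    using assms by (simp add: psi_vals_def)
qed

lemma PQ_products_ideal:
  assumes "s \<in> R" "w \<in> PQ_products k" "k > 0"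
  shows "s * w \<in> PQ_products k \<and> w * s \<in> PQ_products k"
proof -
  obtain ps qs where w: "w = nprod ps * nprod qs" "length ps = k" "length qs = k"
    "set ps \<subseteq> P" "set qs \<subseteq> Q"
    using assms(2) by (auto simp: PQ_products_def)
  obtain p ps' where ps: "ps = p # ps'" using w(2) assms(3) by (cases ps) auto
  obtain qs' q where qs: "qs = qs' @ [q]" using w(3) assms(3) by (cases qs rule: rev_exhaust) auto
  have "s * w = nprod ((s * p) # ps') * nprod qs" "w * s = nprod ps * nprod (qs' @ [q * s])"
    unfolding w(1) ps qs nprod_lmult[symmetric] nprod_rmult[symmetric] by (simp_all add: mult.assoc)
  moreover have "set ((s * p) # ps') \<subseteq> P" "set (qs' @ [q * s]) \<subseteq> Q"
    using w(4,5) ps qs assms(1) mult_RP mult_QR by auto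
  ultimately show ?thesis
    using w ps qs unfolding PQ_products_def by fastforce
qed

lemma semi_full_id: "semi_full R P Q (\<lambda>a b. a * b) id id id G"
  unfolding semi_full_def graded_cov_rep_def
proof (intro conjI allI)
  show "surj_cov_rep R P Q (\<lambda>a b. a * b) id id id" by (rule surj_cov_rep_id)
  show "Z_graded G" by (rule Z_graded_G)
  fix k :: nat
  show "setprod (G (- int k)) (G (int k)) = I_ideal R P Q (\<lambda>a b. a * b) id G k"
  proof (cases "k = 0")
    case True
    have "gen_ideal R {x * y | x y. x \<in> R \<and> y \<in> R} = add_span {x * y | x y. x \<in> R \<and> y \<in> R}"
    proof (rule gen_ideal_eq_add_span)
      fix s w assume "s \<in> R" "w \<in> {x * y | x y. x \<in> R \<and> y \<in> R}"
      then obtain x y where "w = x * y" "s * x \<in> R" "x \<in> R" "y \<in> R" "y * s \<in> R"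
        using mult_RR by blast
      then show "s * w \<in> {x * y | x y. x \<in> R \<and> y \<in> R} \<and> w * s \<in> {x * y | x y. x \<in> R \<and> y \<in> R}"
        by (metis (mono_tags, lifting) mem_Collect_eq mult.assoc)
    qed
    then show ?thesis using True by (simp add: I_ideal_def psi_vals_def setprod_def)
  next
    case False
    have "I_ideal R P Q (\<lambda>a b. a * b) id G k = add_span (PQ_products k)"
      unfolding I_ideal_def image_id id_apply psi_vals_eq_PQ_products[OF False[unfolded neq0_conv]]
      by (rule gen_ideal_eq_add_span, rule PQ_products_ideal) (use False in simp_all)
    then show ?thesis using setprod_neg_pos_component False by simp
  qed
qed auto

end

section \<open>The Toeplitz ring of a pre-CP ring and its Cuntz-Pimsner quotient\<close>

lemma toeplitz_grading_subset:
  assumes "add_subgroup S"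
    and "\<And>x y m n. x \<in> tmon iR iQ R Q m \<Longrightarrow> y \<in> tmon iR iP R P n \<Longrightarrow> int m - int n = i
           \<Longrightarrow> x * y \<in> S"
    and "\<And>r x y m n. r \<in> R \<Longrightarrow> x \<in> tmon iR iQ R Q m \<Longrightarrow> y \<in> tmon iR iP R P n
           \<Longrightarrow> int m - int n = i \<Longrightarrow> iR r * x * y \<in> S"
  shows "toeplitz_grading R P Q iP iQ iR i \<subseteq> S"
  unfolding toeplitz_grading_def using assms by (intro add_span_subset) blast+

locale pre_CP_toeplitz = pre_CP_ring G
  for G :: "int \<Rightarrow> 'a::ring set" +
  fixes iP iQ iR :: "'a \<Rightarrow> 'b::ring"
    and \<rho> :: "'b \<Rightarrow> 'c::ring"
  assumes toeplitz: "toeplitz_rep (G 0) (G (-1)) (G 1) (\<lambda>a b. a * b) iP iQ iR"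
    and universal: "universal_for (G 0) (G (-1)) (G 1) (\<lambda>a b. a * b) iP iQ iR TYPE('a)"
    and rho_hom: "ring_hom \<rho>" and rho_surj: "surj \<rho>"
    and rho_ker: "{x. \<rho> x = 0} = toeplitz_ideal (G 0) (G (-1)) (G 1) (\<lambda>a b. a * b) iP iQ iR
                                     (CP_ideal (G 0) (G (-1)) (G 1) (\<lambda>a b. a * b))"
begin

abbreviation T :: "int \<Rightarrow> 'b set" where "T \<equiv> toeplitz_grading R P Q iP iQ iR"

lemma cov_rep_iota: "cov_rep R P Q (\<lambda>a b. a * b) iP iQ iR"
  using toeplitz by (simp add: toeplitz_rep_def graded_cov_rep_def surj_cov_rep_def)

lemma Z_graded_T: "Z_graded T"
  using toeplitz by (simp add: toeplitz_rep_def graded_cov_rep_def)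

lemma iP_in_T: "p \<in> P \<Longrightarrow> iP p \<in> T (-1)"
  using toeplitz by (auto simp: toeplitz_rep_def graded_cov_rep_def)

lemma iQ_in_T: "q \<in> Q \<Longrightarrow> iQ q \<in> T 1"
  using toeplitz by (auto simp: toeplitz_rep_def graded_cov_rep_def)

lemma mult_T: "x \<in> T i \<Longrightarrow> y \<in> T j \<Longrightarrow> x * y \<in> T (i + j)"
  using Z_graded_T by (simp add: Z_graded_def)

lemma iR_add: "r \<in> R \<Longrightarrow> r' \<in> R \<Longrightarrow> iR (r + r') = iR r + iR r'"
  using cov_rep_iota by (simp add: cov_rep_def)
lemma iR_mult: "r \<in> R \<Longrightarrow> r' \<in> R \<Longrightarrow> iR (r * r') = iR r * iR r'"
  using cov_rep_iota by (simp add: cov_rep_def)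
lemma iP_add: "p \<in> P \<Longrightarrow> p' \<in> P \<Longrightarrow> iP (p + p') = iP p + iP p'"
  using cov_rep_iota by (simp add: cov_rep_def)
lemma iQ_add: "q \<in> Q \<Longrightarrow> q' \<in> Q \<Longrightarrow> iQ (q + q') = iQ q + iQ q'"
  using cov_rep_iota by (simp add: cov_rep_def)
lemma iP_lmult: "p \<in> P \<Longrightarrow> r \<in> R \<Longrightarrow> iP (r * p) = iR r * iP p"
  using cov_rep_iota by (simp add: cov_rep_def)
lemma iQ_lmult: "q \<in> Q \<Longrightarrow> r \<in> R \<Longrightarrow> iQ (r * q) = iR r * iQ q"
  using cov_rep_iota by (simp add: cov_rep_def)
lemma iQ_rmult: "q \<in> Q \<Longrightarrow> r \<in> R \<Longrightarrow> iQ (q * r) = iQ q * iR r"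
  using cov_rep_iota by (simp add: cov_rep_def)
lemma iP_mult_iQ: "p \<in> P \<Longrightarrow> q \<in> Q \<Longrightarrow> iR (p * q) = iP p * iQ q"
  using cov_rep_iota by (simp add: cov_rep_def)

lemma iR_zero: "iR 0 = 0"
  by (rule additive_on_zero[OF add_subgroup_component iR_add])
lemma iR_uminus: "r \<in> R \<Longrightarrow> iR (- r) = - iR r"
  by (rule additive_on_uminus[OF add_subgroup_component iR_add])
lemma iP_zero: "iP 0 = 0"
  by (rule additive_on_zero[OF add_subgroup_component iP_add])
lemma iQ_zero: "iQ 0 = 0"
  by (rule additive_on_zero[OF add_subgroup_component iQ_add])

definition canon :: "'b \<Rightarrow> 'a" where
  "canon = (SOME \<phi>. rep_morph R P Q iP iQ iR id id id \<phi>)"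

lemma rep_morph_canon: "rep_morph R P Q iP iQ iR id id id canon"
proof -
  have "\<exists>!\<phi>. rep_morph R P Q iP iQ iR id id id \<phi>"
    using universal surj_cov_rep_id unfolding universal_for_def surj_cov_rep_def by blast
  then have "\<exists>\<phi>. rep_morph R P Q iP iQ iR id id id \<phi>" by (rule ex1_implies_ex)
  then show ?thesis unfolding canon_def by (rule someI_ex)
qed

lemma ring_hom_canon: "ring_hom canon"
  using rep_morph_canon by (simp add: rep_morph_def)
lemma canon_iP [simp]: "p \<in> P \<Longrightarrow> canon (iP p) = p"
  using rep_morph_canon by (simp add: rep_morph_def)
lemma canon_iQ [simp]: "q \<in> Q \<Longrightarrow> canon (iQ q) = q"
  using rep_morph_canon by (simp add: rep_morph_def)
lemma canon_iR [simp]: "r \<in> R \<Longrightarrow> canon (iR r) = r"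
  using rep_morph_canon by (simp add: rep_morph_def)

lemmas canon_simps = ring_hom_simps[OF ring_hom_canon]
lemmas rho_simps = ring_hom_simps[OF rho_hom]

lemma nprod_component: "set xs \<subseteq> G i \<Longrightarrow> xs \<noteq> [] \<Longrightarrow> nprod xs \<in> G (i * int (length xs))"
proof (induction xs rule: nprod.induct)
  case (3 x y xs)
  then have "x * nprod (y # xs) \<in> G (i + i * int (length (y # xs)))"
    by (intro mult_component) auto
  then show ?case by (simp add: algebra_simps)
qed auto

lemma canon_tmon_Q: "x \<in> tmon iR iQ R Q m \<Longrightarrow> canon x \<in> G (int m)"
proof (cases "m = 0")
  case False
  assume "x \<in> tmon iR iQ R Q m"
  then obtain xs where xs: "x = nprod (map iQ xs)" "length xs = m" "set xs \<subseteq> Q"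
    using False by (auto simp: tmon_def)
  have "map canon (map iQ xs) = xs" using xs(3) by (induction xs) auto
  then have "canon x = nprod xs" using xs(1) ring_hom_nprod[OF ring_hom_canon] by simp
  then show ?thesis using nprod_component[OF xs(3)] xs(2) False by auto
qed (auto simp: tmon_def)

lemma canon_tmon_P: "x \<in> tmon iR iP R P m \<Longrightarrow> canon x \<in> G (- int m)"
proof (cases "m = 0")
  case False
  assume "x \<in> tmon iR iP R P m"
  then obtain xs where xs: "x = nprod (map iP xs)" "length xs = m" "set xs \<subseteq> P"
    using False by (auto simp: tmon_def)
  have "map canon (map iP xs) = xs" using xs(3) by (induction xs) auto
  then have "canon x = nprod xs" using xs(1) ring_hom_nprod[OF ring_hom_canon] by simp
  then show ?thesis using nprod_component[OF xs(3)] xs(2) False by auto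
qed (auto simp: tmon_def)

lemma canon_T: "b \<in> T i \<Longrightarrow> canon b \<in> G i"
proof -
  have "add_subgroup {b. canon b \<in> G i}"
    by (auto simp: add_subgroup_def canon_simps zero_component add_component uminus_component)
  then have "T i \<subseteq> {b. canon b \<in> G i}"
  proof (rule toeplitz_grading_subset)
    fix x y m n assume "x \<in> tmon iR iQ R Q m" "y \<in> tmon iR iP R P n" "int m - int n = i"
    then show "x * y \<in> {b. canon b \<in> G i}"
      using mult_component[OF canon_tmon_Q canon_tmon_P] by (auto simp: canon_simps)
  next
    fix r x y m n assume "r \<in> R" "x \<in> tmon iR iQ R Q m" "y \<in> tmon iR iP R P n" "int m - int n = i"
    then show "iR r * x * y \<in> {b. canon b \<in> G i}"
      using mult_component[OF mult_component[OF _ canon_tmon_Q] canon_tmon_P, of r 0]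
      by (auto simp: canon_simps)
  qed
  then show "b \<in> T i \<Longrightarrow> canon b \<in> G i" by blast
qed

lemma rho_iR_QP:
  assumes "q \<in> Q" "p \<in> P"
  shows "\<rho> (iR (q * p)) = \<rho> (iQ q * iP p)"
proof -
  have "q * p \<in> J"
    using assms setprod_QP_subset_J sum_list_in_setprod[of "[(q,p)]" Q P] by auto
  then have "iR (q * p) - (\<Sum>(a,c)\<leftarrow>[(q,p)]. iQ a * iP c)
      \<in> toeplitz_ideal R P Q (\<lambda>a b. a * b) iP iQ iR J"
    unfolding toeplitz_ideal_def using assms
    by (intro gen_ideal.base CollectI exI[of _ "q * p"] exI[of _ "[(q,p)]"]) (auto simp: mult.assoc)
  then have "\<rho> (iR (q * p) - iQ q * iP p) = 0" using rho_ker CP_ideal_eq_J by auto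
  then show ?thesis by (simp add: ring_hom_diff[OF rho_hom])
qed

text \<open>Words with as many iQ as iP factors, nested as iQ q_1 (... (iQ q_k x iP p_k) ...) iP p_1;
  as A need not be unital, the inner factor x = iR r may be absent.\<close>

inductive_set balanced :: "'b set" where
  base: "r \<in> R \<Longrightarrow> iR r \<in> balanced"
| pair: "q \<in> Q \<Longrightarrow> p \<in> P \<Longrightarrow> iQ q * iP p \<in> balanced"
| wrap: "q \<in> Q \<Longrightarrow> x \<in> balanced \<Longrightarrow> p \<in> P \<Longrightarrow> iQ q * x * iP p \<in> balanced"
| lmult: "r \<in> R \<Longrightarrow> x \<in> balanced \<Longrightarrow> iR r * x \<in> balanced"

lemma canon_balanced: "x \<in> balanced \<Longrightarrow> canon x \<in> R"
  by (induction rule: balanced.induct) (auto simp: canon_simps intro: mult_QP mult_RR mult_QR)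

lemma rho_balanced: "x \<in> balanced \<Longrightarrow> \<rho> x = \<rho> (iR (canon x))"
proof (induction rule: balanced.induct)
  case (pair q p)
  then show ?case using rho_iR_QP by (simp add: canon_simps)
next
  case (wrap q x p)
  have c: "canon x \<in> R" "q * canon x \<in> Q" using wrap canon_balanced mult_QR by auto
  have "\<rho> (iQ q * x * iP p) = \<rho> (iQ q * iR (canon x) * iP p)"
    using wrap.IH by (simp add: rho_simps)
  also have "\<dots> = \<rho> (iR (q * canon x * p))"
    using wrap.hyps c iQ_rmult rho_iR_QP by simp
  finally show ?case using wrap.hyps by (simp add: canon_simps)
next
  case (lmult r x)
  then show ?case using canon_balanced by (simp add: rho_simps canon_simps iR_mult)
qed simp

lemma QP_chain_balanced:
  "length qs = Suc m \<Longrightarrow> length ps = Suc m \<Longrightarrow> set qs \<subseteq> Q \<Longrightarrow> set ps \<subseteq> P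
    \<Longrightarrow> nprod (map iQ qs) * nprod (map iP ps) \<in> balanced"
proof (induction m arbitrary: qs ps)
  case 0
  then show ?case by (auto simp: length_Suc_conv intro: balanced.pair)
next
  case (Suc m)
  obtain q qs' where qs: "qs = q # qs'" using Suc.prems(1) by (cases qs) auto
  obtain ps' p where ps: "ps = ps' @ [p]" using Suc.prems(2) by (cases ps rule: rev_exhaust) auto
  have "qs' \<noteq> []" "ps' \<noteq> []" using Suc.prems(1,2) qs ps by auto
  then have "nprod (map iQ qs) * nprod (map iP ps)
      = iQ q * (nprod (map iQ qs') * nprod (map iP ps')) * iP p"
    using qs ps by (simp add: nprod_Cons nprod_snoc mult.assoc)
  moreover have "nprod (map iQ qs') * nprod (map iP ps') \<in> balanced"
    using Suc.IH Suc.prems qs ps by simp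
  ultimately show ?case using Suc.prems(3,4) qs ps by (simp add: balanced.wrap)
qed

lemma tmon_mult_balanced:
  assumes "x \<in> tmon iR iQ R Q m" "y \<in> tmon iR iP R P m"
  shows "x * y \<in> balanced"
proof (cases m)
  case 0
  then show ?thesis using assms by (auto simp: tmon_def intro: balanced.intros)
next
  case (Suc m')
  then show ?thesis using assms QP_chain_balanced by (auto simp: tmon_def)
qed

lemma T_zero_subset_balanced: "T 0 \<subseteq> add_span balanced"
proof (rule toeplitz_grading_subset[OF add_subgroup_add_span])
  fix x y m n assume "x \<in> tmon iR iQ R Q m" "y \<in> tmon iR iP R P n" "int m - int n = 0"
  then show "x * y \<in> add_span balanced"
    using tmon_mult_balanced by (auto intro: add_span.base)
next
  fix r x y m n assume "r \<in> R" "x \<in> tmon iR iQ R Q m" "y \<in> tmon iR iP R P n" "int m - int n = 0"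
  then have "iR r * (x * y) \<in> balanced" using tmon_mult_balanced by (simp add: balanced.lmult)
  then show "iR r * x * y \<in> add_span balanced" by (simp add: mult.assoc add_span.base)
qed

lemma rho_T_zero: "b \<in> T 0 \<Longrightarrow> \<rho> b = \<rho> (iR (canon b))"
proof -
  assume "b \<in> T 0"
  then have "b \<in> add_span balanced" using T_zero_subset_balanced by blast
  then have "canon b \<in> R \<and> \<rho> b = \<rho> (iR (canon b))"
  proof induction
    case (base x)
    then show ?case using canon_balanced rho_balanced by blast
  next
    case (add x y)
    then show ?case by (simp add: canon_simps rho_simps iR_add add_component)
  next
    case (neg x)
    then show ?case by (simp add: canon_simps rho_simps iR_uminus uminus_component)
  qed (simp add: canon_simps iR_zero zero_component)
  then show ?thesis ..
qed

definition QT :: "'b set" where "QT = add_span {iQ q * z | q z. q \<in> Q}"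
definition TP :: "'b set" where "TP = add_span {z * iP p | z p. p \<in> P}"

lemma tmon_Q_mult_in_QT:
  assumes "0 < m" "x \<in> tmon iR iQ R Q m"
  shows "x * y \<in> QT"
proof -
  obtain q qs where "x = nprod (map iQ (q # qs))" "q \<in> Q"
    using assms by (auto simp: tmon_def neq_Nil_conv)
  then have "\<exists>z. x * y = iQ q * z \<and> q \<in> Q"
    by (cases qs) (auto simp: mult.assoc)
  then show ?thesis unfolding QT_def by (blast intro: add_span.base)
qed

lemma tmon_Q_lmult_iR:
  assumes "0 < m" "x \<in> tmon iR iQ R Q m" "r \<in> R"
  shows "iR r * x \<in> tmon iR iQ R Q m"
proof -
  obtain q qs where x: "x = nprod (map iQ (q # qs))" "length (q # qs) = m" "set (q # qs) \<subseteq> Q"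
    using assms by (auto simp: tmon_def neq_Nil_conv)
  have "iR r * x = nprod (map iQ ((r * q) # qs))"
    using x assms(3) by (simp add: nprod_lmult iQ_lmult)
  moreover have "length ((r * q) # qs) = m" "set ((r * q) # qs) \<subseteq> Q"
    using x assms(3) mult_RQ by auto
  ultimately have "iR r * x \<in> {nprod (map iQ xs) | xs. length xs = m \<and> set xs \<subseteq> Q}"
    by blast
  then show ?thesis using assms(1) by (simp add: tmon_def)
qed

lemma T_pos_subset_QT: "0 < i \<Longrightarrow> T i \<subseteq> QT"
proof (rule toeplitz_grading_subset)
  show "add_subgroup QT" unfolding QT_def by (rule add_subgroup_add_span)
next
  fix x y m n assume "0 < i" "x \<in> tmon iR iQ R Q m" "int m - int n = i"
  moreover from this have "0 < m" by linarith
  ultimately show "x * y \<in> QT" using tmon_Q_mult_in_QT by blast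
next
  fix r x y m n assume "0 < i" "r \<in> R" "x \<in> tmon iR iQ R Q m" "int m - int n = i"
  moreover from this have "0 < m" by linarith
  ultimately show "iR r * x * y \<in> QT" using tmon_Q_mult_in_QT tmon_Q_lmult_iR by blast
qed

lemma mult_tmon_P_in_TP:
  assumes "0 < n" "y \<in> tmon iR iP R P n"
  shows "x * y \<in> TP"
proof -
  obtain xs where xs: "y = nprod (map iP xs)" "length xs = n" "set xs \<subseteq> P"
    using assms by (auto simp: tmon_def)
  then obtain ps p where y: "y = nprod (map iP (ps @ [p]))" "p \<in> P"
    using assms(1) by (cases xs rule: rev_exhaust) auto
  then have "\<exists>z. x * y = z * iP p \<and> p \<in> P"
    by (cases "ps = []") (auto simp: nprod_snoc mult.assoc[symmetric])
  then show ?thesis unfolding TP_def by (blast intro: add_span.base)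
qed

lemma T_neg_subset_TP: "i < 0 \<Longrightarrow> T i \<subseteq> TP"
proof (rule toeplitz_grading_subset)
  show "add_subgroup TP" unfolding TP_def by (rule add_subgroup_add_span)
next
  fix x y m n assume "i < 0" "y \<in> tmon iR iP R P n" "int m - int n = i"
  moreover from this have "0 < n" by linarith
  ultimately show "x * y \<in> TP" using mult_tmon_P_in_TP by blast
next
  fix r x y m n assume "i < 0" "y \<in> tmon iR iP R P n" "int m - int n = i"
  moreover from this have "0 < n" by linarith
  ultimately show "iR r * x * y \<in> TP" using mult_tmon_P_in_TP by blast
qed

lemma sum_QP_mult_iQ:
  assumes "set l \<subseteq> Q \<times> P" "q \<in> Q"
  shows "(\<Sum>(a,c)\<leftarrow>l. iQ a * iP c) * iQ q = iQ ((\<Sum>(a,c)\<leftarrow>l. a * c) * q)"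
  using assms(1)
proof (induction l)
  case Nil
  then show ?case by (simp add: iQ_zero)
next
  case (Cons ac l)
  obtain a c where ac: "ac = (a, c)" "a \<in> Q" "c \<in> P" using Cons.prems by (cases ac) auto
  have "(\<Sum>(a,c)\<leftarrow>l. a * c) * q \<in> Q"
    using Cons.prems sum_list_in_setprod[of l Q P] setprod_QP_subset_R mult_RQ assms(2) by auto
  moreover have "iQ a * iP c * iQ q = iQ (a * c * q)"
    using ac assms(2) by (simp add: iP_mult_iQ[symmetric] iQ_rmult mult_PQ mult.assoc)
  moreover have "a * c * q \<in> Q" using ac assms(2) mult_QP mult_RQ by simp
  ultimately show ?case using Cons ac by (simp add: distrib_right iQ_add)
qed

lemma iP_mult_sum_QP:
  assumes "set l \<subseteq> Q \<times> P" "p \<in> P"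
  shows "iP p * (\<Sum>(a,c)\<leftarrow>l. iQ a * iP c) = iP (p * (\<Sum>(a,c)\<leftarrow>l. a * c))"
  using assms(1)
proof (induction l)
  case Nil
  then show ?case by (simp add: iP_zero)
next
  case (Cons ac l)
  obtain a c where ac: "ac = (a, c)" "a \<in> Q" "c \<in> P" using Cons.prems by (cases ac) auto
  have "p * (\<Sum>(a,c)\<leftarrow>l. a * c) \<in> P"
    using Cons.prems sum_list_in_setprod[of l Q P] setprod_QP_subset_R mult_PR assms(2) by auto
  moreover have "iP p * (iQ a * iP c) = iP (p * (a * c))"
    using ac assms(2)
    by (simp add: iP_mult_iQ[symmetric] iP_lmult mult_PQ mult.assoc[symmetric])
  moreover have "p * (a * c) \<in> P" using ac assms(2) mult_QP mult_PR by simp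
  ultimately show ?case using Cons ac by (simp add: distrib_left iP_add)
qed

lemma QT_local_unit:
  assumes "b \<in> QT"
  shows "\<exists>F. finite F \<and> F \<subseteq> Q \<and> (\<forall>l. set l \<subseteq> Q \<times> P \<longrightarrow>
           (\<forall>q\<in>F. (\<Sum>(a,c)\<leftarrow>l. a * c) * q = q) \<longrightarrow> (\<Sum>(a,c)\<leftarrow>l. iQ a * iP c) * b = b)"
  using assms unfolding QT_def
proof induction
  case (base x)
  then obtain q z where "x = iQ q * z" "q \<in> Q" by blast
  then show ?case
    using sum_QP_mult_iQ by (intro exI[of _ "{q}"]) (auto simp: mult.assoc[symmetric])
next
  case (add x y)
  then obtain F1 F2 where "finite F1" "F1 \<subseteq> Q" "finite F2" "F2 \<subseteq> Q"
    "\<forall>l. set l \<subseteq> Q \<times> P \<longrightarrow> (\<forall>q\<in>F1. (\<Sum>(a,c)\<leftarrow>l. a * c) * q = q) \<longrightarrow> (\<Sum>(a,c)\<leftarrow>l. iQ a * iP c) * x = x"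
    "\<forall>l. set l \<subseteq> Q \<times> P \<longrightarrow> (\<forall>q\<in>F2. (\<Sum>(a,c)\<leftarrow>l. a * c) * q = q) \<longrightarrow> (\<Sum>(a,c)\<leftarrow>l. iQ a * iP c) * y = y"
    by blast
  then show ?case by (intro exI[of _ "F1 \<union> F2"]) (auto simp: distrib_left)
qed auto

lemma TP_local_unit:
  assumes "b \<in> TP"
  shows "\<exists>F. finite F \<and> F \<subseteq> P \<and> (\<forall>l. set l \<subseteq> Q \<times> P \<longrightarrow>
           (\<forall>p\<in>F. p * (\<Sum>(a,c)\<leftarrow>l. a * c) = p) \<longrightarrow> b * (\<Sum>(a,c)\<leftarrow>l. iQ a * iP c) = b)"
  using assms unfolding TP_def
proof induction
  case (base x)
  then obtain p z where "x = z * iP p" "p \<in> P" by blast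
  then show ?case
    using iP_mult_sum_QP by (intro exI[of _ "{p}"]) (auto simp: mult.assoc)
next
  case (add x y)
  then obtain F1 F2 where "finite F1" "F1 \<subseteq> P" "finite F2" "F2 \<subseteq> P"
    "\<forall>l. set l \<subseteq> Q \<times> P \<longrightarrow> (\<forall>p\<in>F1. p * (\<Sum>(a,c)\<leftarrow>l. a * c) = p) \<longrightarrow> x * (\<Sum>(a,c)\<leftarrow>l. iQ a * iP c) = x"
    "\<forall>l. set l \<subseteq> Q \<times> P \<longrightarrow> (\<forall>p\<in>F2. p * (\<Sum>(a,c)\<leftarrow>l. a * c) = p) \<longrightarrow> y * (\<Sum>(a,c)\<leftarrow>l. iQ a * iP c) = y"
    by blast
  then show ?case by (intro exI[of _ "F1 \<union> F2"]) (auto simp: distrib_right)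
qed auto

lemma rho_QT_eq_zero:
  assumes "b \<in> QT" "\<And>c. c \<in> P \<Longrightarrow> \<rho> (iP c * b) = 0"
  shows "\<rho> b = 0"
proof -
  obtain F where F: "finite F" "F \<subseteq> Q" "\<forall>l. set l \<subseteq> Q \<times> P \<longrightarrow>
      (\<forall>q\<in>F. (\<Sum>(a,c)\<leftarrow>l. a * c) * q = q) \<longrightarrow> (\<Sum>(a,c)\<leftarrow>l. iQ a * iP c) * b = b"
    using QT_local_unit[OF assms(1)] by blast
  obtain u where u: "u \<in> setprod Q P" "\<forall>q\<in>F. u * q = q" using QP_left_unit[OF F(1,2)] by blast
  obtain l where l: "set l \<subseteq> Q \<times> P" "u = (\<Sum>(a,c)\<leftarrow>l. a * c)"
    using setprod_QP_obtain_list[OF u(1)] .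
  have "\<rho> ((\<Sum>(a,c)\<leftarrow>l. iQ a * iP c) * b) = 0"
    using l(1) assms(2) by (induction l) (auto simp: rho_simps distrib_right mult.assoc)
  then show ?thesis using F(3) l u(2) by simp
qed

lemma rho_TP_eq_zero:
  assumes "b \<in> TP" "\<And>a. a \<in> Q \<Longrightarrow> \<rho> (b * iQ a) = 0"
  shows "\<rho> b = 0"
proof -
  obtain F where F: "finite F" "F \<subseteq> P" "\<forall>l. set l \<subseteq> Q \<times> P \<longrightarrow>
      (\<forall>p\<in>F. p * (\<Sum>(a,c)\<leftarrow>l. a * c) = p) \<longrightarrow> b * (\<Sum>(a,c)\<leftarrow>l. iQ a * iP c) = b"
    using TP_local_unit[OF assms(1)] by blast
  obtain u where u: "u \<in> setprod Q P" "\<forall>p\<in>F. p * u = p" using QP_right_unit[OF F(1,2)] by blast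
  obtain l where l: "set l \<subseteq> Q \<times> P" "u = (\<Sum>(a,c)\<leftarrow>l. a * c)"
    using setprod_QP_obtain_list[OF u(1)] .
  have "\<rho> (b * (\<Sum>(a,c)\<leftarrow>l. iQ a * iP c)) = 0"
    using l(1) assms(2) by (induction l) (auto simp: rho_simps distrib_left mult.assoc[symmetric])
  then show ?thesis using F(3) l u(2) by simp
qed

lemma rho_eq_0_if_canon_eq_0_nonneg: "b \<in> T (int n) \<Longrightarrow> canon b = 0 \<Longrightarrow> \<rho> b = 0"
proof (induction n arbitrary: b)
  case 0
  then show ?case using rho_T_zero by (simp add: iR_zero rho_simps)
next
  case (Suc n)
  show ?case
  proof (rule rho_QT_eq_zero)
    show "b \<in> QT" using T_pos_subset_QT Suc.prems(1) by force
    fix c assume "c \<in> P"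
    then have "iP c * b \<in> T (int n)" using mult_T[OF iP_in_T Suc.prems(1)] by simp
    then show "\<rho> (iP c * b) = 0" using Suc.IH Suc.prems(2) by (simp add: canon_simps)
  qed
qed

lemma rho_eq_0_if_canon_eq_0_nonpos: "b \<in> T (- int n) \<Longrightarrow> canon b = 0 \<Longrightarrow> \<rho> b = 0"
proof (induction n arbitrary: b)
  case 0
  then show ?case using rho_eq_0_if_canon_eq_0_nonneg[of b 0] by simp
next
  case (Suc n)
  show ?case
  proof (rule rho_TP_eq_zero)
    show "b \<in> TP" using T_neg_subset_TP Suc.prems(1) by force
    fix a assume "a \<in> Q"
    then have "b * iQ a \<in> T (- int n)" using mult_T[OF Suc.prems(1) iQ_in_T] by simp
    then show "\<rho> (b * iQ a) = 0" using Suc.IH Suc.prems(2) by (simp add: canon_simps)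
  qed
qed

lemma rho_eq_0_if_canon_eq_0_homogeneous: "b \<in> T i \<Longrightarrow> canon b = 0 \<Longrightarrow> \<rho> b = 0"
  using rho_eq_0_if_canon_eq_0_nonneg[of b "nat i"] rho_eq_0_if_canon_eq_0_nonpos[of b "nat (- i)"]
  by (cases "0 \<le> i") simp_all

lemma toeplitz_decomposition:
  obtains f where "finite {i. f i \<noteq> 0}" "\<forall>i. f i \<in> T i" "b = (\<Sum>i\<in>{i. f i \<noteq> 0}. f i)"
  using Z_graded_T unfolding Z_graded_def by blast

lemma canon_decomposition:
  assumes "finite {i. f i \<noteq> 0}" "\<forall>i. f i \<in> T i"
    and "finite S" "\<forall>j. g j \<in> G j" "\<forall>j. j \<notin> S \<longrightarrow> g j = 0"
    and "canon (\<Sum>i\<in>{i. f i \<noteq> 0}. f i) = sum g S"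
  shows "canon (f k) = g k"
proof -
  have "(\<lambda>j. canon (f j)) = g"
  proof (rule graded_decomposition_unique[OF assms(1) _ _ assms(3-5)])
    show "\<forall>j. canon (f j) \<in> G j" using assms(2) canon_T by blast
    show "\<forall>j. j \<notin> {i. f i \<noteq> 0} \<longrightarrow> canon (f j) = 0" by (simp add: canon_simps)
    show "(\<Sum>j\<in>{i. f i \<noteq> 0}. canon (f j)) = sum g S"
      using assms(6) ring_hom_sum[OF ring_hom_canon, of f "{i. f i \<noteq> 0}"] by simp
  qed
  from fun_cong[OF this, of k] show ?thesis by simp
qed

lemma rho_eq_0_if_canon_eq_0: "canon b = 0 \<Longrightarrow> \<rho> b = 0"
proof -
  assume b: "canon b = 0"
  obtain f where f: "finite {i. f i \<noteq> 0}" "\<forall>i. f i \<in> T i" "b = (\<Sum>i\<in>{i. f i \<noteq> 0}. f i)"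
    using toeplitz_decomposition by blast
  have "canon (f i) = 0" for i
    using canon_decomposition[OF f(1,2), where S="{}" and g="\<lambda>_. 0"] b f(3) zero_component by simp
  then have "\<rho> (f i) = 0" for i using rho_eq_0_if_canon_eq_0_homogeneous f(2) by blast
  then show "\<rho> b = 0" using f(3) ring_hom_sum[OF rho_hom, of f "{i. f i \<noteq> 0}"] by simp
qed

text \<open>A generator iR x - (\<Sum>(q,p)\<leftarrow>l. iQ q * iP p) of the Cuntz-Pimsner ideal is mapped
  to an element of J annihilating Q, which vanishes since J is faithful.\<close>

lemma canon_eq_0_if_rho_eq_0: "\<rho> b = 0 \<Longrightarrow> canon b = 0"
proof -
  assume "\<rho> b = 0"
  then have "b \<in> gen_ideal UNIV {iR x - (\<Sum>(q,p)\<leftarrow>l. iQ q * iP p) | x l. x \<in> J \<and>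
      set l \<subseteq> Q \<times> P \<and> (\<forall>y\<in>Q. x * y = (\<Sum>(q,p)\<leftarrow>l. q * (p * y)))}"
    using rho_ker CP_ideal_eq_J by (auto simp: toeplitz_ideal_def)
  then show "canon b = 0"
  proof induction
    case (base z)
    then obtain x l where z: "z = iR x - (\<Sum>(q,p)\<leftarrow>l. iQ q * iP p)" "x \<in> J" "set l \<subseteq> Q \<times> P"
      "\<forall>y\<in>Q. x * y = (\<Sum>(q,p)\<leftarrow>l. q * (p * y))" by blast
    have x: "x \<in> R" using z(2) is_ideal_J by (auto simp: is_ideal_def)
    have "canon (\<Sum>(q,p)\<leftarrow>l. iQ q * iP p) = (\<Sum>(q,p)\<leftarrow>l. q * p)"
      using z(3) by (induction l) (auto simp: canon_simps)
    then have canon_z: "canon z = x - (\<Sum>(q,p)\<leftarrow>l. q * p)"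
      using z(1) x by (simp add: canon_simps)
    have "(\<Sum>(q,p)\<leftarrow>l. q * p) \<in> J"
      using setprod_QP_subset_J sum_list_in_setprod[OF z(3)] by blast
    then have "x - (\<Sum>(q,p)\<leftarrow>l. q * p) \<in> J"
      using z(2) is_ideal_J add_subgroup_diff unfolding is_ideal_def by blast
    moreover have "\<forall>y\<in>Q. (x - (\<Sum>(q,p)\<leftarrow>l. q * p)) * y = 0"
      using z(4) by (simp add: left_diff_distrib sum_list_pair_mult_right)
    ultimately have "x - (\<Sum>(q,p)\<leftarrow>l. q * p) = 0"
      using faithful_J unfolding faithful_ideal_def by blast
    then show ?case using canon_z by simp
  qed (auto simp: canon_simps)
qed

lemma canon_surj: "surj canon"
proof -
  have "gen_subring (R \<union> P \<union> Q) \<subseteq> range canon"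
  proof
    fix x assume "x \<in> gen_subring (R \<union> P \<union> Q)"
    then show "x \<in> range canon"
    proof induction
      case (base x)
      then consider "x \<in> R" | "x \<in> P" | "x \<in> Q" by blast
      then show ?case
        by cases (metis canon_iR rangeI, metis canon_iP rangeI, metis canon_iQ rangeI)
    next
      case zero
      have "0 = canon 0" by (simp add: canon_simps)
      then show ?case by (rule range_eqI)
    next
      case (add x y)
      then obtain b c where "x = canon b" "y = canon c" by blast
      then have "x + y = canon (b + c)" by (simp add: canon_simps)
      then show ?case by (rule range_eqI)
    next
      case (neg x)
      then obtain b where "x = canon b" by blast
      then have "- x = canon (- b)" by (simp add: canon_simps)
      then show ?case by (rule range_eqI)
    next
      case (mult x y)
      then obtain b c where "x = canon b" "y = canon c" by blast
      then have "x * y = canon (b * c)" by (simp add: canon_simps)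
      then show ?case by (rule range_eqI)
    qed
  qed
  then show ?thesis using gen_subring_eq_UNIV by auto
qed

definition cp_iso :: "'a \<Rightarrow> 'c" where "cp_iso x = \<rho> (SOME b. canon b = x)"

lemma cp_iso_canon [simp]: "cp_iso (canon b) = \<rho> b"
proof -
  have "canon (SOME c. canon c = canon b) = canon b" by (rule someI) (rule refl)
  then have "\<rho> ((SOME c. canon c = canon b) - b) = 0"
    by (intro rho_eq_0_if_canon_eq_0) (simp add: canon_simps)
  then show ?thesis unfolding cp_iso_def by (simp add: rho_simps)
qed

lemma ring_hom_cp_iso: "ring_hom cp_iso"
  unfolding ring_hom_def
proof (intro allI conjI)
  fix x y
  obtain b c where "x = canon b" "y = canon c" using canon_surj by (metis surjD)
  then show "cp_iso (x + y) = cp_iso x + cp_iso y" "cp_iso (x * y) = cp_iso x * cp_iso y"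
    by (simp_all add: canon_simps[symmetric] rho_simps)
qed

lemma bij_cp_iso: "bij cp_iso"
proof (rule bijI)
  show "inj cp_iso"
  proof (rule injI)
    fix x y assume e: "cp_iso x = cp_iso y"
    obtain b c where bc: "x = canon b" "y = canon c" using canon_surj by (metis surjD)
    then have "\<rho> (b - c) = 0" using e by (simp add: rho_simps)
    then have "canon (b - c) = 0" by (rule canon_eq_0_if_rho_eq_0)
    then show "x = y" using bc by (simp add: canon_simps)
  qed
  show "surj cp_iso"
    by (metis cp_iso_canon rho_surj surj_def)
qed

lemma rep_morph_cp_iso: "rep_morph R P Q id id id (\<rho> \<circ> iP) (\<rho> \<circ> iQ) (\<rho> \<circ> iR) cp_iso"
proof -
  have "cp_iso p = \<rho> (iP p)" if "p \<in> P" for p using cp_iso_canon[of "iP p"] that by simp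
  moreover have "cp_iso q = \<rho> (iQ q)" if "q \<in> Q" for q using cp_iso_canon[of "iQ q"] that by simp
  moreover have "cp_iso r = \<rho> (iR r)" if "r \<in> R" for r using cp_iso_canon[of "iR r"] that by simp
  ultimately show ?thesis unfolding rep_morph_def using ring_hom_cp_iso by simp
qed

lemma cp_iso_component: "cp_iso ` G i = \<rho> ` T i"
proof
  show "\<rho> ` T i \<subseteq> cp_iso ` G i"
  proof
    fix z assume "z \<in> \<rho> ` T i"
    then obtain b where "b \<in> T i" "z = cp_iso (canon b)" by auto
    then show "z \<in> cp_iso ` G i" using canon_T by blast
  qed
  show "cp_iso ` G i \<subseteq> \<rho> ` T i"
  proof
    fix z assume "z \<in> cp_iso ` G i"
    then obtain x where x: "x \<in> G i" "z = cp_iso x" by blast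
    obtain b where "x = canon b" using canon_surj by (metis surjD)
    then have b: "canon b \<in> G i" "z = \<rho> b" using x by simp_all
    obtain f where f: "finite {i. f i \<noteq> 0}" "\<forall>i. f i \<in> T i" "b = (\<Sum>i\<in>{i. f i \<noteq> 0}. f i)"
      using toeplitz_decomposition by blast
    have "canon (f i) = canon b"
      using canon_decomposition[OF f(1,2), where S="{i}" and g="\<lambda>j. if j = i then canon b else 0"]
        b(1) f(3) zero_component by auto
    then have "z = \<rho> (f i)" using b(2) cp_iso_canon by metis
    then show "z \<in> \<rho> ` T i" using f(2) by blast
  qed
qed

end

theorem mainTheorem14:
  fixes G :: "int \<Rightarrow> 'a::ring set"
    and iP iQ iR :: "'a \<Rightarrow> 'b::ring"
    and \<rho> :: "'b \<Rightarrow> 'c::ring"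
  assumes preCP: "pre_CP G"
    and toep: "toeplitz_rep (G 0) (G (-1)) (G 1) (\<lambda>a b. a * b) iP iQ iR"
    and univ_a: "universal_for (G 0) (G (-1)) (G 1) (\<lambda>a b. a * b) iP iQ iR TYPE('a)"
    and univ_b: "universal_for (G 0) (G (-1)) (G 1) (\<lambda>a b. a * b) iP iQ iR TYPE('b)"
    and univ_c: "universal_for (G 0) (G (-1)) (G 1) (\<lambda>a b. a * b) iP iQ iR TYPE('c)"
    and rho_hom: "ring_hom \<rho>" and rho_surj: "surj \<rho>"
    and rho_ker: "{x. \<rho> x = 0} = toeplitz_ideal (G 0) (G (-1)) (G 1) (\<lambda>a b. a * b) iP iQ iR
                                   (CP_ideal (G 0) (G (-1)) (G 1) (\<lambda>a b. a * b))"
  shows "s_unital_system (G 0) (G (-1)) (G 1) (\<lambda>a b. a * b)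
       \<and> condition_FS (G (-1)) (G 1) (\<lambda>a b. a * b)
       \<and> CP_well_defined (G 0) (G (-1)) (G 1) (\<lambda>a b. a * b)
       \<and> surj_cov_rep (G 0) (G (-1)) (G 1) (\<lambda>a b. a * b) id id id
       \<and> rep_iso (G 0) (G (-1)) (G 1) id id id (\<rho> \<circ> iP) (\<rho> \<circ> iQ) (\<rho> \<circ> iR)
       \<and> graded_iso G (\<lambda>i. \<rho> ` toeplitz_grading (G 0) (G (-1)) (G 1) iP iQ iR i)
       \<and> semi_full (G 0) (G (-1)) (G 1) (\<lambda>a b. a * b) id id id G"
proof -
  interpret pre_CP_toeplitz G iP iQ iR \<rho>
    using preCP toep univ_a rho_hom rho_surj rho_ker by unfold_locales
  have "rep_iso R P Q id id id (\<rho> \<circ> iP) (\<rho> \<circ> iQ) (\<rho> \<circ> iR)"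
    unfolding rep_iso_def using rep_morph_cp_iso bij_cp_iso by blast
  moreover have "graded_iso G (\<lambda>i. \<rho> ` T i)"
    unfolding graded_iso_def using ring_hom_cp_iso bij_cp_iso cp_iso_component by blast
  ultimately show ?thesis
    using s_unital_system condition_FS CP_well_defined surj_cov_rep_id semi_full_id by blast
qed

end
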